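(* Let $X$ be a weak complicial set, $x\in X_0$ a vertex and $n\ge 1$. Let $\alpha,\alpha',\beta,\beta'$ be $n$-simplices of $X$ whose restrictions to $\partial\Delta[n]$ are constant at $x$, with $\alpha\sim_{\partial\Delta[n]}\alpha'$ and $\beta\sim_{\partial\Delta[n]}\beta'$. Let $\theta:\Delta^n[n+1]\to X$ be any stratified map whose face $d_{n-1}\theta$ is $\alpha$, whose face $d_{n+1}\theta$ is $\beta$, and whose other faces $d_i\theta$, $i\notin\{n-1,n,n+1\}$, are constant at $x$; and let $\theta'$ be any such map for $\alpha',\beta'$. Then $d_n\theta\sim_{\partial\Delta[n]} d_n\theta'$. (Such $\theta,\theta'$ exist, and the class $[d_n\theta]$ in $\tau_n(X,x)$ thus depends only on $[\alpha]$ and $[\beta]$.)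
   Context: A stratified simplicial set is a pair $(X,tX)$ where $X$ is a simplicial set and $tX$ is a set of simplices of $X$ (thin simplices) containing all degenerate simplices and no $0$-simplices; stratified maps are simplicial maps preserving thin simplices. A regular stratified subset $(X,tX)\subset(Y,tY)$ means $X\subset Y$, $tX=X\cap tY$. For $n\ge1$, $\Delta[n]_t$ is $\Delta[n]$ with thin simplices the degenerate ones and $\mathrm{Id}_{[n]}$. For $k\in[n]$, $\Delta^k[n]$ is $\Delta[n]$ with thin simplices the degenerate ones and all $\alpha:[m]\to[n]$ with $\{k-1,k,k+1\}\cap[n]\subset\mathrm{Im}(\alpha)$; $\Lambda^k[n]$ is the regular stratified subset of $\Delta^k[n]$ generated by the faces $\delta_i$, $i\neq k$; $\Delta^k[n]''$ (resp. $\Lambda^k[n]'$) is $\Delta^k[n]$ (resp. $\Lambda^k[n]$) with additionally all its $(n-1)$-simplices thin; $\Delta^k[n]'=\Delta^k[n]\cup\Lambda^k[n]'$. A weak complicial set is a stratified simplicial set with the right lifting property against $\Lambda^k[n]\hookrightarrow\Delta^k[n]$ ($n\ge1$, $k\in[n]$) and $\Delta^k[n]'\hookrightarrow\Delta^k[n]''$ ($n\ge2$, $k\in[n]$). The product $X\circledast Y$ has underlying simplicial set $X\times Y$, with $(x,y)$ thin iff $x$ and $y$ are thin. For stratified maps $f,g:A\to X$ and an inclusion $B\hookrightarrow A$ with $f|_B=g|_B$, $f\sim_B g$ means there is a stratified map $H:A\circledast\Delta[1]_t\to X$ with $H|_{A\times\{0\}}=f$, $H|_{A\times\{1\}}=g$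 and $H|_{B\circledast\Delta[1]_t}=f|_B\circ\mathrm{proj}_B$. Here $n$-simplices $\alpha$ of $X$ are regarded as stratified maps $\Delta[n]\to X$ where $\Delta[n]$ carries the stratification with only degenerate simplices thin, and $\partial\Delta[n]$ the induced one. For $n\ge1$, $\tau_n(X,x)$ is the set of equivalence classes under $\sim_{\partial\Delta[n]}$ of $n$-simplices $\alpha$ of $X$ whose restriction to $\partial\Delta[n]$ is constant at $x$. *)

theory Defs
  imports Main
begin

text \<open>A morphism [m] -> [n] of the simplex category is a monotone map
  {0..m} -> {0..n}, represented canonically as a function nat => nat that is 0
  outside {0..m}.\<close>

definition dmor :: "nat \<Rightarrow> nat \<Rightarrow> (nat \<Rightarrow> nat) \<Rightarrow> bool" where
  "dmor m n f \<longleftrightarrow> (\<forall>i\<le>m. f i \<le> n) \<and> (\<forall>i j. i \<le> j \<longrightarrow> j \<le> m \<longrightarrow> f i \<le> f j)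
     \<and> (\<forall>i. m < i \<longrightarrow> f i = 0)"

definition didx :: "nat \<Rightarrow> nat \<Rightarrow> nat" where
  "didx n = (\<lambda>i. if i \<le> n then i else 0)"

definition dcomp :: "nat \<Rightarrow> (nat \<Rightarrow> nat) \<Rightarrow> (nat \<Rightarrow> nat) \<Rightarrow> nat \<Rightarrow> nat" where
  "dcomp l f g = (\<lambda>i. if i \<le> l then f (g i) else 0)"

text \<open>A stratified simplicial set: simplices of each dimension, the action of
  simplicial operators (Act l m g x is x.g for g : [l] -> [m]), and thin simplices.\<close>
record 'a sset =
  Simp :: "nat \<Rightarrow> 'a set"
  Act :: "nat \<Rightarrow> nat \<Rightarrow> (nat \<Rightarrow> nat) \<Rightarrow> 'a \<Rightarrow> 'a"
  Thin :: "nat \<Rightarrow> 'a set"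

definition simplicial_set :: "('a, 'b) sset_scheme \<Rightarrow> bool" where
  "simplicial_set X \<longleftrightarrow>
     (\<forall>l m g x. dmor l m g \<longrightarrow> x \<in> Simp X m \<longrightarrow> Act X l m g x \<in> Simp X l)
   \<and> (\<forall>n x. x \<in> Simp X n \<longrightarrow> Act X n n (didx n) x = x)
   \<and> (\<forall>l m n g f x. dmor l m g \<longrightarrow> dmor m n f \<longrightarrow> x \<in> Simp X n \<longrightarrow>
        Act X l m g (Act X m n f x) = Act X l n (dcomp l f g) x)"

definition degenerate :: "('a, 'b) sset_scheme \<Rightarrow> nat \<Rightarrow> 'a \<Rightarrow> bool" where
  "degenerate X m x \<longleftrightarrow> x \<in> Simp X m \<and>
     (\<exists>k<m. \<exists>g y. dmor m k g \<and> y \<in> Simp X k \<and> x = Act X m k g y)"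

definition stratified :: "('a, 'b) sset_scheme \<Rightarrow> bool" where
  "stratified X \<longleftrightarrow> simplicial_set X \<and> (\<forall>m. Thin X m \<subseteq> Simp X m)
     \<and> (\<forall>m x. degenerate X m x \<longrightarrow> x \<in> Thin X m) \<and> Thin X 0 = {}"

text \<open>Stratified maps (only their values on simplices matter).\<close>
definition smap :: "('a, 'c) sset_scheme \<Rightarrow> ('b, 'd) sset_scheme \<Rightarrow> (nat \<Rightarrow> 'a \<Rightarrow> 'b) \<Rightarrow> bool" where
  "smap A Y f \<longleftrightarrow> (\<forall>m a. a \<in> Simp A m \<longrightarrow> f m a \<in> Simp Y m)
     \<and> (\<forall>l m g a. dmor l m g \<longrightarrow> a \<in> Simp A m \<longrightarrow> f l (Act A l m g a) = Act Y l m g (f m a))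
     \<and> (\<forall>m a. a \<in> Thin A m \<longrightarrow> f m a \<in> Thin Y m)"

text \<open>Right lifting property of X against an inclusion A into B (A a stratified
  subset of B with the same carrier type).\<close>
definition rlp :: "('a, 'c) sset_scheme \<Rightarrow> 'b sset \<Rightarrow> 'b sset \<Rightarrow> bool" where
  "rlp X A B \<longleftrightarrow> (\<forall>f. smap A X f \<longrightarrow>
      (\<exists>g. smap B X g \<and> (\<forall>m a. a \<in> Simp A m \<longrightarrow> g m a = f m a)))"

definition strat_delta :: "nat \<Rightarrow> (nat \<Rightarrow> (nat \<Rightarrow> nat) set) \<Rightarrow> (nat \<Rightarrow> nat) sset" where
  "strat_delta n T = \<lparr>Simp = (\<lambda>m. {f. dmor m n f}), Act = (\<lambda>l m g a. dcomp l a g), Thin = T\<rparr>"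

definition dgn :: "nat \<Rightarrow> nat \<Rightarrow> (nat \<Rightarrow> nat) set" where
  "dgn n m = {a. degenerate (strat_delta n (\<lambda>_. {})) m a}"

definition Delta :: "nat \<Rightarrow> (nat \<Rightarrow> nat) sset" where
  "Delta n = strat_delta n (dgn n)"

definition Delta_t :: "nat \<Rightarrow> (nat \<Rightarrow> nat) sset" where
  "Delta_t n = strat_delta n (\<lambda>m. dgn n m \<union> (if m = n then {didx n} else {}))"

definition hornset :: "nat \<Rightarrow> nat \<Rightarrow> nat set" where
  "hornset k n = {j. j \<le> n \<and> (j + 1 = k \<or> j = k \<or> j = k + 1)}"

definition Delta_k :: "nat \<Rightarrow> nat \<Rightarrow> (nat \<Rightarrow> nat) sset" where
  "Delta_k k n = strat_delta n
     (\<lambda>m. dgn n m \<union> {a. dmor m n a \<and> hornset k n \<subseteq> a ` {0..m}})"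

definition horn_simp :: "nat \<Rightarrow> nat \<Rightarrow> nat \<Rightarrow> (nat \<Rightarrow> nat) set" where
  "horn_simp k n m = {a. dmor m n a \<and> (\<exists>i\<le>n. i \<noteq> k \<and> i \<notin> a ` {0..m})}"

definition Lambda :: "nat \<Rightarrow> nat \<Rightarrow> (nat \<Rightarrow> nat) sset" where
  "Lambda k n = \<lparr>Simp = horn_simp k n, Act = (\<lambda>l m g a. dcomp l a g),
      Thin = (\<lambda>m. Thin (Delta_k k n) m \<inter> horn_simp k n m)\<rparr>"

definition Delta_k'' :: "nat \<Rightarrow> nat \<Rightarrow> (nat \<Rightarrow> nat) sset" where
  "Delta_k'' k n = (Delta_k k n)\<lparr>Thin := (\<lambda>m. Thin (Delta_k k n) m \<union>
      (if m + 1 = n then {a. dmor m n a} else {}))\<rparr>"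

definition Lambda' :: "nat \<Rightarrow> nat \<Rightarrow> (nat \<Rightarrow> nat) sset" where
  "Lambda' k n = (Lambda k n)\<lparr>Thin := (\<lambda>m. Thin (Lambda k n) m \<union>
      (if m + 1 = n then horn_simp k n m else {}))\<rparr>"

definition Delta_k' :: "nat \<Rightarrow> nat \<Rightarrow> (nat \<Rightarrow> nat) sset" where
  "Delta_k' k n = (Delta_k k n)\<lparr>Thin := (\<lambda>m. Thin (Delta_k k n) m \<union> Thin (Lambda' k n) m)\<rparr>"

definition bdry :: "nat \<Rightarrow> (nat \<Rightarrow> nat) sset" where
  "bdry n = \<lparr>Simp = (\<lambda>m. {a. dmor m n a \<and> a ` {0..m} \<noteq> {0..n}}),
      Act = (\<lambda>l m g a. dcomp l a g),
      Thin = (\<lambda>m. {a. a \<in> dgn n m \<and> a ` {0..m} \<noteq> {0..n}})\<rparr>"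

definition coface :: "nat \<Rightarrow> nat \<Rightarrow> nat \<Rightarrow> nat" where
  "coface n i = (\<lambda>j. if j \<le> n then (if j < i then j else j + 1) else 0)"

definition weak_complicial :: "('a, 'b) sset_scheme \<Rightarrow> bool" where
  "weak_complicial X \<longleftrightarrow> stratified X
     \<and> (\<forall>n k. 1 \<le> n \<longrightarrow> k \<le> n \<longrightarrow> rlp X (Lambda k n) (Delta_k k n))
     \<and> (\<forall>n k. 2 \<le> n \<longrightarrow> k \<le> n \<longrightarrow> rlp X (Delta_k' k n) (Delta_k'' k n))"

definition sprod :: "('a, 'c) sset_scheme \<Rightarrow> ('b, 'd) sset_scheme \<Rightarrow> ('a \<times> 'b) sset" where
  "sprod A B = \<lparr>Simp = (\<lambda>m. Simp A m \<times> Simp B m),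
      Act = (\<lambda>l m g p. (Act A l m g (fst p), Act B l m g (snd p))),
      Thin = (\<lambda>m. Thin A m \<times> Thin B m)\<rparr>"

definition const0 :: "nat \<Rightarrow> nat \<Rightarrow> nat" where "const0 m = (\<lambda>i. 0)"
definition const1 :: "nat \<Rightarrow> nat \<Rightarrow> nat" where "const1 m = (\<lambda>i. if i \<le> m then 1 else 0)"

definition htpy :: "('a, 'c) sset_scheme \<Rightarrow> ('b, 'd) sset_scheme \<Rightarrow> ('b, 'e) sset_scheme
    \<Rightarrow> (nat \<Rightarrow> 'b \<Rightarrow> 'a) \<Rightarrow> (nat \<Rightarrow> 'b \<Rightarrow> 'a) \<Rightarrow> bool" where
  "htpy X A B f g \<longleftrightarrow> smap A X f \<and> smap A X g
     \<and> (\<forall>m b. b \<in> Simp B m \<longrightarrow> f m b = g m b)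
     \<and> (\<exists>H. smap (sprod A (Delta_t 1)) X H
         \<and> (\<forall>m a. a \<in> Simp A m \<longrightarrow> H m (a, const0 m) = f m a \<and> H m (a, const1 m) = g m a)
         \<and> (\<forall>m b t. b \<in> Simp B m \<longrightarrow> t \<in> Simp (Delta_t 1) m \<longrightarrow> H m (b, t) = f m b))"

text \<open>The n-simplex a of X regarded as a map Delta[n] -> X (Yoneda).\<close>
definition ymap :: "('a, 'b) sset_scheme \<Rightarrow> nat \<Rightarrow> 'a \<Rightarrow> nat \<Rightarrow> (nat \<Rightarrow> nat) \<Rightarrow> 'a" where
  "ymap X n a = (\<lambda>m g. Act X m n g a)"

definition shtpy :: "('a, 'b) sset_scheme \<Rightarrow> nat \<Rightarrow> 'a \<Rightarrow> 'a \<Rightarrow> bool" where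
  "shtpy X n a b \<longleftrightarrow> htpy X (Delta n) (bdry n) (ymap X n a) (ymap X n b)"

definition vconst :: "('a, 'b) sset_scheme \<Rightarrow> nat \<Rightarrow> 'a \<Rightarrow> 'a" where
  "vconst X m x = Act X m 0 (\<lambda>_. 0) x"

definition bdry_const :: "('a, 'b) sset_scheme \<Rightarrow> nat \<Rightarrow> 'a \<Rightarrow> 'a \<Rightarrow> bool" where
  "bdry_const X n x a \<longleftrightarrow> a \<in> Simp X n \<and>
     (\<forall>m g. g \<in> Simp (bdry n) m \<longrightarrow> Act X m n g a = vconst X m x)"

end

theory Submission
  imports Defs
begin

text \<open>For j \<le> n write a \<sim>_j b when some thin (n+1)-simplex has faces a, b in positions j, j+1
  and all its other faces constant at x. Filling (n+2)-dimensional horns whose faces are such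
  witnesses, together with the thinness extension \<Delta>^k[m]' \<subseteq> \<Delta>^k[m]'', shows that all the
  relations \<sim>_j coincide and form an equivalence relation. Restricting a homotopy rel boundary
  \<Delta>[n] \<times> \<Delta>[1] \<rightarrow> X to the n + 1 simplices of the standard triangulation of the prism gives a
  chain of such witnesses from one end to the other, and conversely any chain assembles into such
  a homotopy; hence \<sim>_n is homotopy rel boundary. Finally \<theta> is itself a witness at level
  n - 1 with faces \<alpha>, d_n\<theta>, \<beta>; comparing \<theta> and \<theta>' with a filler for \<alpha>' and \<beta>
  through two more horn fillings yields d_n\<theta> \<sim>_n d_n\<theta>'.\<close>

section \<open>Monotone maps between finite ordinals\<close>

lemma dmor_coface: "dmor n (Suc n) (coface n i)"
  unfolding dmor_def coface_def by auto

lemma dmor_dcomp: "dmor l m g \<Longrightarrow> dmor m n f \<Longrightarrow> dmor l n (dcomp l f g)"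
  unfolding dmor_def dcomp_def by auto

lemma dmor_didx: "dmor n n (didx n)"
  unfolding dmor_def didx_def by auto

lemma dmor_const0: "dmor m 0 (\<lambda>_. 0)"
  unfolding dmor_def by auto

lemma dcomp_didx_left: "dmor l m g \<Longrightarrow> dcomp l (didx m) g = g"
  unfolding dmor_def dcomp_def didx_def by (rule ext) auto

lemma dmor_zero: "dmor m n f \<Longrightarrow> m < i \<Longrightarrow> f i = 0"
  unfolding dmor_def by auto

lemma dmor_le: "dmor m n f \<Longrightarrow> i \<le> m \<Longrightarrow> f i \<le> n"
  unfolding dmor_def by auto

lemma dmor_mono: "dmor m n f \<Longrightarrow> i \<le> j \<Longrightarrow> j \<le> m \<Longrightarrow> f i \<le> f j"
  unfolding dmor_def by auto

lemma dmor_image_subset: "dmor m n f \<Longrightarrow> f ` {0..m} \<subseteq> {0..n}"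
  using dmor_le by fastforce

lemma dcomp_coface_coface:
  assumes "i < r" "r \<le> Suc (Suc K)"
  shows "dcomp K (coface (Suc K) r) (coface K i) = dcomp K (coface (Suc K) i) (coface K (r - 1))"
  using assms unfolding dcomp_def coface_def by (rule_tac ext) auto

lemma coface_inj: "coface K i s = coface K i s' \<Longrightarrow> s \<le> K \<Longrightarrow> s' \<le> K \<Longrightarrow> s = s'"
  unfolding coface_def by (auto split: if_splits)

lemma bdry_simp_iff: "a \<in> Simp (bdry n) m \<longleftrightarrow> dmor m n a \<and> (\<exists>s\<le>n. s \<notin> a ` {0..m})"
proof -
  have "a ` {0..m} \<noteq> {0..n} \<longleftrightarrow> (\<exists>s\<le>n. s \<notin> a ` {0..m})" if "dmor m n a"
    using dmor_image_subset[OF that] by auto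
  then show ?thesis unfolding bdry_def by auto
qed

lemma coface_bdry: "i \<le> Suc K \<Longrightarrow> coface K i \<in> Simp (bdry (Suc K)) K"
  unfolding bdry_simp_iff using dmor_coface by (auto simp: coface_def)

definition cofactor :: "nat \<Rightarrow> (nat \<Rightarrow> nat) \<Rightarrow> nat \<Rightarrow> nat" where
  "cofactor r a = (\<lambda>t. if a t < r then a t else a t - 1)"

lemma dmor_cofactor:
  assumes a: "dmor m (Suc K) a" and r: "r \<le> Suc K" and nr: "r \<notin> a ` {0..m}"
  shows "dmor m K (cofactor r a)"
  unfolding dmor_def
proof (intro conjI allI impI)
  fix i assume i: "i \<le> m"
  have "a i \<le> Suc K" "a i \<noteq> r" using dmor_le[OF a i] nr i by auto
  then show "cofactor r a i \<le> K" using r unfolding cofactor_def by auto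
next
  fix i j assume ij: "i \<le> j" "j \<le> m"
  have "a i \<le> a j" "a i \<noteq> r" "a j \<noteq> r" using dmor_mono[OF a ij] nr ij by auto
  then show "cofactor r a i \<le> cofactor r a j" unfolding cofactor_def by auto
next
  fix i assume "m < i"
  then show "cofactor r a i = 0" using dmor_zero[OF a] unfolding cofactor_def by auto
qed

lemma coface_cofactor:
  assumes a: "dmor m (Suc K) a" and r: "r \<le> Suc K" and nr: "r \<notin> a ` {0..m}"
  shows "dcomp m (coface K r) (cofactor r a) = a"
proof (rule ext)
  fix t show "dcomp m (coface K r) (cofactor r a) t = a t"
  proof (cases "t \<le> m")
    case True
    have "a t \<le> Suc K" "a t \<noteq> r" using dmor_le[OF a True] nr True by auto
    then show ?thesis using True r unfolding dcomp_def coface_def cofactor_def by auto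
  qed (use dmor_zero[OF a] in \<open>auto simp: dcomp_def\<close>)
qed

lemma cofactor_dcomp: "cofactor r (dcomp l a g) = dcomp l (cofactor r a) g"
  unfolding cofactor_def dcomp_def by (rule ext) auto

lemma cofactor_coface: "cofactor i (coface K i) = didx K"
  unfolding cofactor_def coface_def didx_def by (rule ext) auto

lemma cofactor_cofactor:
  assumes "i < i'" "\<And>t. t \<le> m \<Longrightarrow> a t \<noteq> i \<and> a t \<noteq> i'" "dmor m N a"
  shows "cofactor (i' - 1) (cofactor i a) = cofactor i (cofactor i' a)"
proof (rule ext)
  fix t show "cofactor (i' - 1) (cofactor i a) t = cofactor i (cofactor i' a) t"
    using assms(1) assms(2)[of t] dmor_zero[OF assms(3), of t] unfolding cofactor_def
    by (cases "t \<le> m") auto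
qed

lemma image_coface_cofactor:
  assumes "dmor m (Suc K) a" "r \<le> Suc K" "r \<notin> a ` {0..m}"
  shows "(\<lambda>t. coface K r (cofactor r a t)) ` {0..m} = a ` {0..m}"
proof (intro image_cong refl)
  fix t assume "t \<in> {0..m}"
  then show "coface K r (cofactor r a t) = a t"
    using fun_cong[OF coface_cofactor[OF assms], of t] unfolding dcomp_def by simp
qed

definition codegeneracy :: "nat \<Rightarrow> nat \<Rightarrow> nat \<Rightarrow> nat" where
  "codegeneracy m i = (\<lambda>t. if t \<le> m then (if t \<le> i then t else t - 1) else 0)"

lemma dmor_codegeneracy: "i \<le> m \<Longrightarrow> dmor (Suc m) m (codegeneracy (Suc m) i)"
  unfolding dmor_def codegeneracy_def by auto

lemma codegeneracy_factor:
  assumes u: "dmor (Suc m) N u" and i: "i \<le> m" and eq: "u i = u (Suc i)"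
  shows "u = dcomp (Suc m) (dcomp m u (coface m i)) (codegeneracy (Suc m) i)"
proof (rule ext)
  fix t show "u t = dcomp (Suc m) (dcomp m u (coface m i)) (codegeneracy (Suc m) i) t"
  proof (cases "t \<le> Suc m")
    case True
    then show ?thesis using i eq unfolding dcomp_def coface_def codegeneracy_def
      by (cases "t < i"; cases "t = i"; auto)
  qed (use dmor_zero[OF u] in \<open>auto simp: dcomp_def\<close>)
qed

lemma dcomp_codegeneracy_coface:
  "dcomp n (codegeneracy (Suc n) j) (coface n i) t =
   (if t \<le> n then (if t < i then (if t \<le> j then t else t - 1) else (if Suc t \<le> j then Suc t else t)) else 0)"
  unfolding dcomp_def codegeneracy_def coface_def by simp

lemma dcomp_codegeneracy_coface_didx:
  "j \<le> n \<Longrightarrow> i = j \<or> i = Suc j \<Longrightarrow> dcomp n (codegeneracy (Suc n) j) (coface n i) = didx n"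
  unfolding dcomp_def codegeneracy_def coface_def didx_def by (rule ext) auto

lemma dcomp_codegeneracy_coface_bdry:
  assumes j: "j \<le> n" and i: "i \<le> Suc n" "i \<noteq> j" "i \<noteq> Suc j"
  shows "dcomp n (codegeneracy (Suc n) j) (coface n i) \<in> Simp (bdry n) n"
proof -
  define w where "w = dcomp n (codegeneracy (Suc n) j) (coface n i)"
  have "dmor n n w" unfolding w_def by (rule dmor_dcomp[OF dmor_coface dmor_codegeneracy[OF j]])
  moreover obtain s where "s \<le> n" "\<And>t. t \<le> n \<Longrightarrow> w t \<noteq> s"
  proof (cases "i < j")
    case True
    show ?thesis by (rule that[of i]) (use True j in \<open>auto simp: w_def dcomp_codegeneracy_coface\<close>)
  next
    case False
    then have "Suc j < i" using i by simp
    show ?thesis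
      by (rule that[of "i - 1"]) (use \<open>Suc j < i\<close> i in \<open>auto simp: w_def dcomp_codegeneracy_coface\<close>)
  qed
  then have "\<exists>s\<le>n. s \<notin> w ` {0..n}" by fastforce
  ultimately show ?thesis unfolding bdry_simp_iff w_def by blast
qed

lemma dgn_dmor: "a \<in> dgn N m \<Longrightarrow> dmor m N a"
  unfolding dgn_def degenerate_def strat_delta_def by simp

lemma strict_mono_on_atLeastAtMost:
  fixes u :: "nat \<Rightarrow> nat"
  assumes "\<And>i. i < m \<Longrightarrow> u i < u (Suc i)"
  shows "strict_mono_on {0..m} u"
proof (rule strict_mono_onI)
  fix r s :: nat assume "r \<in> {0..m}" "s \<in> {0..m}" "r < s"
  then show "u r < u s"
  proof (induction s)
    case (Suc s)
    then show ?case using assms[of s] by (cases "r = s") auto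
  qed simp
qed

lemma strict_lower_bound:
  assumes "\<And>i. i < m \<Longrightarrow> u i < u (Suc i)"
  shows "t \<le> m \<Longrightarrow> t + u 0 \<le> u t"
proof (induction t)
  case (Suc t) then show ?case using assms[of t] by simp
qed simp

lemma strict_upper_bound:
  assumes "\<And>i. i < m \<Longrightarrow> u i < u (Suc i)"
  shows "t \<le> m \<Longrightarrow> u t + (m - t) \<le> u m"
proof (induction "m - t" arbitrary: t)
  case (Suc d)
  then have "Suc t \<le> m" by simp
  with Suc have "u (Suc t) + (m - Suc t) \<le> u m" by simp
  moreover have "u t < u (Suc t)" using assms \<open>Suc t \<le> m\<close> by simp
  ultimately show ?case using \<open>Suc t \<le> m\<close> by simp
qed simp

lemma dmor_strict_endo_eq_didx:
  assumes u: "dmor m m u" and strict: "\<And>i. i < m \<Longrightarrow> u i < u (Suc i)"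
  shows "u = didx m"
proof -
  have "u t = t" if "t \<le> m" for t
    using strict_lower_bound[of m u t] strict_upper_bound[of m u t] strict that dmor_le[OF u, of m]
    by simp
  then show ?thesis using dmor_zero[OF u] by (intro ext) (auto simp: didx_def)
qed

lemma dmor_strict_surj_eq_didx:
  assumes u: "dmor m K u" and strict: "\<And>i. i < m \<Longrightarrow> u i < u (Suc i)"
    and surj: "\<And>s. s \<le> K \<Longrightarrow> s \<in> u ` {0..m}"
  shows "m = K \<and> u = didx K"
proof -
  have "strict_mono_on {0..m} u" using strict by (rule strict_mono_on_atLeastAtMost)
  then have "card (u ` {0..m}) = card {0..m}"
    by (intro card_image strict_mono_on_imp_inj_on)
  moreover have "u ` {0..m} = {0..K}" using dmor_image_subset[OF u] surj by auto
  ultimately have "m = K" by simp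
  then show ?thesis using dmor_strict_endo_eq_didx u strict by blast
qed

lemma dgn_repeat:
  assumes "a \<in> dgn N m"
  shows "\<exists>i<m. a i = a (Suc i)"
proof (rule ccontr)
  assume no_repeat: "\<not> (\<exists>i<m. a i = a (Suc i))"
  from assms obtain k g y where k: "k < m" and g: "dmor m k g" and a: "a = dcomp m y g"
    and am: "dmor m N a"
    unfolding dgn_def degenerate_def strat_delta_def by auto
  have "a i < a (Suc i)" if "i < m" for i
    using no_repeat that dmor_mono[OF am, of i "Suc i"] by fastforce
  then have "strict_mono_on {0..m} a" by (rule strict_mono_on_atLeastAtMost)
  have "inj_on g {0..m}"
  proof (rule inj_onI)
    fix i j assume ij: "i \<in> {0..m}" "j \<in> {0..m}" "g i = g j"
    then have "a i = a j" using a unfolding dcomp_def by auto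
    then show "i = j" using strict_mono_on_eqD[OF \<open>strict_mono_on {0..m} a\<close> _ ij(1,2)] by blast
  qed
  then have "card {0..m} \<le> card {0..k}"
    using dmor_image_subset[OF g] by (meson card_inj_on_le finite_atLeastAtMost)
  then show False using k by simp
qed

lemma dmor_repeat_or_strict:
  assumes "dmor m N u"
  shows "(\<exists>i<m. u i = u (Suc i)) \<or> (\<forall>i<m. u i < u (Suc i))"
proof -
  have "u i < u (Suc i)" if "i < m" "u i \<noteq> u (Suc i)" for i
    using dmor_mono[OF assms, of i "Suc i"] that by simp
  then show ?thesis by blast
qed

lemma hornset_two: "k \<le> N \<Longrightarrow> 1 \<le> N \<Longrightarrow> \<exists>a b. a \<noteq> b \<and> a \<in> hornset k N \<and> b \<in> hornset k N"
proof (cases "k < N")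
  case True
  then show ?thesis by (intro exI[of _ k] exI[of _ "Suc k"]) (auto simp: hornset_def)
next
  case False
  moreover assume "k \<le> N" "1 \<le> N"
  ultimately show ?thesis by (intro exI[of _ k] exI[of _ "k - 1"]) (auto simp: hornset_def)
qed

lemma pos_if_two_values: "a \<noteq> b \<Longrightarrow> a \<in> v ` {0..m} \<Longrightarrow> b \<in> v ` {0..(m::nat)} \<Longrightarrow> 1 \<le> m"
  by (cases m) auto

section \<open>Stratified maps and simplicial sets\<close>

lemma smap_simp: "smap A Y f \<Longrightarrow> a \<in> Simp A m \<Longrightarrow> f m a \<in> Simp Y m"
  unfolding smap_def by blast

lemma smap_act: "smap A Y f \<Longrightarrow> dmor l m g \<Longrightarrow> a \<in> Simp A m \<Longrightarrow> f l (Act A l m g a) = Act Y l m g (f m a)"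
  unfolding smap_def by blast

lemma smap_thin: "smap A Y f \<Longrightarrow> a \<in> Thin A m \<Longrightarrow> f m a \<in> Thin Y m"
  unfolding smap_def by blast

locale simplicial =
  fixes X :: "('a, 'b) sset_scheme"
  assumes simplicial_set: "simplicial_set X"
begin

lemma act_simp: "dmor l m g \<Longrightarrow> y \<in> Simp X m \<Longrightarrow> Act X l m g y \<in> Simp X l"
  using simplicial_set unfolding simplicial_set_def by blast

lemma act_didx: "y \<in> Simp X n \<Longrightarrow> Act X n n (didx n) y = y"
  using simplicial_set unfolding simplicial_set_def by blast

lemma act_dcomp: "dmor l m g \<Longrightarrow> dmor m n f \<Longrightarrow> y \<in> Simp X n \<Longrightarrow>
   Act X l m g (Act X m n f y) = Act X l n (dcomp l f g) y"
  using simplicial_set unfolding simplicial_set_def by blast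

definition face :: "nat \<Rightarrow> nat \<Rightarrow> 'a \<Rightarrow> 'a" where
  "face K i z = Act X K (Suc K) (coface K i) z"

lemma face_simp: "z \<in> Simp X (Suc K) \<Longrightarrow> face K i z \<in> Simp X K"
  unfolding face_def by (rule act_simp[OF dmor_coface])

lemma face_face:
  assumes "i < r" "r \<le> Suc (Suc K)" and z: "z \<in> Simp X (Suc (Suc K))"
  shows "face K i (face (Suc K) r z) = face K (r - 1) (face (Suc K) i z)"
  unfolding face_def using dcomp_coface_coface[OF assms(1,2)]
  by (simp add: act_dcomp[OF dmor_coface dmor_coface z])

lemma act_cofactor:
  assumes "y \<in> Simp X (Suc K)" "dmor m (Suc K) a" "r \<le> Suc K" "r \<notin> a ` {0..m}"
  shows "Act X m (Suc K) a y = Act X m K (cofactor r a) (face K r y)"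
  unfolding face_def
  using act_dcomp[OF dmor_cofactor[OF assms(2-4)] dmor_coface assms(1)] coface_cofactor[OF assms(2-4)]
  by simp

lemma repeat_degenerate:
  assumes u: "dmor m N u" and i: "i < m" and eq: "u i = u (Suc i)" and y: "y \<in> Simp X N"
  shows "degenerate X m (Act X m N u y)"
proof -
  obtain m' where m: "m = Suc m'" using i by (cases m) auto
  have im: "i \<le> m'" using i m by simp
  define v where "v = dcomp m' u (coface m' i)"
  have v: "dmor m' N v" unfolding v_def using dmor_dcomp[OF dmor_coface] u m by simp
  have "Act X m N u y = Act X m N (dcomp (Suc m') v (codegeneracy (Suc m') i)) y"
    using codegeneracy_factor[of m' N u i] u m im eq unfolding v_def by simp
  also have "\<dots> = Act X m m' (codegeneracy (Suc m') i) (Act X m' N v y)"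
    using act_dcomp[OF dmor_codegeneracy[OF im] v y] m by simp
  finally show ?thesis
    unfolding degenerate_def using act_simp[OF u y] act_simp[OF v y] dmor_codegeneracy[OF im] m
    by auto
qed

lemma smap_ymap:
  assumes "stratified X" "A \<in> Simp X n"
  shows "smap (Delta n) X (ymap X n A)"
  unfolding smap_def ymap_def
proof (intro conjI allI impI)
  fix m a assume "a \<in> Simp (Delta n) m"
  then show "Act X m n a A \<in> Simp X m" using act_simp assms unfolding Delta_def strat_delta_def by simp
next
  fix l m g a assume "dmor l m g" "a \<in> Simp (Delta n) m"
  then show "Act X l n (Act (Delta n) l m g a) A = Act X l m g (Act X m n a A)"
    using act_dcomp assms unfolding Delta_def strat_delta_def by simp
next
  fix m a assume "a \<in> Thin (Delta n) m"
  then have "a \<in> dgn n m" unfolding Delta_def strat_delta_def by simp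
  then show "Act X m n a A \<in> Thin X m"
    using dgn_repeat dgn_dmor repeat_degenerate assms unfolding stratified_def by blast
qed

end

locale pointed_wcs =
  fixes X :: "'a sset" and x :: 'a
  assumes weak_complicial: "weak_complicial X" and vertex: "x \<in> Simp X 0"

sublocale pointed_wcs \<subseteq> simplicial X
  using weak_complicial by unfold_locales (simp add: weak_complicial_def stratified_def)

context pointed_wcs
begin

lemma stratified: "stratified X"
  using weak_complicial unfolding weak_complicial_def by simp

lemma thin_simp: "y \<in> Thin X m \<Longrightarrow> y \<in> Simp X m"
  using stratified unfolding stratified_def by blast

lemma degenerate_thin: "degenerate X m y \<Longrightarrow> y \<in> Thin X m"
  using stratified unfolding stratified_def by blast

lemma repeat_thin:
  "dmor m N u \<Longrightarrow> i < m \<Longrightarrow> u i = u (Suc i) \<Longrightarrow> y \<in> Simp X N \<Longrightarrow> Act X m N u y \<in> Thin X m"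
  by (rule degenerate_thin, rule repeat_degenerate)

lemma vconst_simp: "vconst X m x \<in> Simp X m"
  unfolding vconst_def by (rule act_simp[OF dmor_const0 vertex])

lemma act_vconst: "dmor l m g \<Longrightarrow> Act X l m g (vconst X m x) = vconst X l x"
  unfolding vconst_def using act_dcomp[OF _ dmor_const0 vertex]
  by (simp add: dcomp_def[of l "\<lambda>_. 0"] cong: if_cong)

lemma face_vconst: "face K i (vconst X (Suc K) x) = vconst X K x"
  unfolding face_def by (rule act_vconst[OF dmor_coface])

lemma vconst_thin: "1 \<le> m \<Longrightarrow> vconst X m x \<in> Thin X m"
  by (rule degenerate_thin) (use vconst_simp vertex dmor_const0 in \<open>force simp: degenerate_def vconst_def\<close>)

lemma act_vconst_of_face:
  assumes "y \<in> Simp X (Suc K)" "dmor m (Suc K) u" "s \<le> Suc K" "s \<notin> u ` {0..m}"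
    and "face K s y = vconst X K x"
  shows "Act X m (Suc K) u y = vconst X m x"
  using act_cofactor[OF assms(1-4)] act_vconst[OF dmor_cofactor[OF assms(2-4)]] assms(5) by simp

text \<open>A map [m] \<rightarrow> [K+1] is degenerate, or the identity, or misses a vertex and then factors
  through the corresponding face.\<close>
lemma thin_act_of_faces_vconst:
  assumes y: "y \<in> Thin X (Suc K)" and m: "1 \<le> m" and u: "dmor m (Suc K) u"
    and faces: "\<And>s. s \<le> Suc K \<Longrightarrow> s \<notin> u ` {0..m} \<Longrightarrow> face K s y = vconst X K x"
  shows "Act X m (Suc K) u y \<in> Thin X m"
proof -
  have ys: "y \<in> Simp X (Suc K)" using thin_simp[OF y] .
  consider "\<exists>i<m. u i = u (Suc i)" | "\<forall>i<m. u i < u (Suc i)" using dmor_repeat_or_strict[OF u] by blast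
  then show ?thesis
  proof cases
    case 1 then show ?thesis using repeat_thin[OF u _ _ ys] by blast
  next
    case 2
    show ?thesis
    proof (cases "\<forall>s\<le>Suc K. s \<in> u ` {0..m}")
      case True
      then have "m = Suc K \<and> u = didx (Suc K)" using dmor_strict_surj_eq_didx[OF u] 2 by blast
      then show ?thesis using act_didx[OF ys] y by simp
    next
      case False
      then obtain s where s: "s \<le> Suc K" "s \<notin> u ` {0..m}" by blast
      then show ?thesis using act_vconst_of_face[OF ys u s faces[OF s]] vconst_thin[OF m] by simp
    qed
  qed
qed

lemma bdry_const_iff_faces:
  assumes a: "a \<in> Simp X (Suc K)"
  shows "bdry_const X (Suc K) x a \<longleftrightarrow> (\<forall>s \<le> Suc K. face K s a = vconst X K x)"
proof
  assume "bdry_const X (Suc K) x a"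
  then show "\<forall>s \<le> Suc K. face K s a = vconst X K x"
    using coface_bdry unfolding bdry_const_def face_def by blast
next
  assume faces: "\<forall>s \<le> Suc K. face K s a = vconst X K x"
  show "bdry_const X (Suc K) x a"
    unfolding bdry_const_def bdry_simp_iff using a act_vconst_of_face[OF a] faces by blast
qed

end

section \<open>Filling horns\<close>

definition horn_index :: "nat \<Rightarrow> nat \<Rightarrow> nat \<Rightarrow> (nat \<Rightarrow> nat) \<Rightarrow> nat" where
  "horn_index k N m a = (SOME i. i \<le> N \<and> i \<noteq> k \<and> i \<notin> a ` {0..m})"

lemma horn_index:
  "a \<in> horn_simp k N m \<Longrightarrow> horn_index k N m a \<le> N \<and> horn_index k N m a \<noteq> k \<and> horn_index k N m a \<notin> a ` {0..m}"
  unfolding horn_simp_def horn_index_def by (rule someI_ex) auto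

lemma horn_simp_dmor: "a \<in> horn_simp k N m \<Longrightarrow> dmor m N a"
  unfolding horn_simp_def by simp

lemma not_in_image_dcomp: "i \<notin> a ` {0..m} \<Longrightarrow> dmor l m g \<Longrightarrow> i \<notin> dcomp l a g ` {0..l}"
  using dmor_le unfolding dcomp_def by fastforce

lemma coface_horn_simp: "i \<le> Suc (Suc K) \<Longrightarrow> i \<noteq> k \<Longrightarrow> coface (Suc K) i \<in> horn_simp k (Suc (Suc K)) (Suc K)"
  unfolding horn_simp_def using dmor_coface by (auto simp: coface_def)

context simplicial
begin

lemma face_smap_didx:
  assumes "smap (strat_delta (Suc K) T) X g"
  shows "face K i (g (Suc K) (didx (Suc K))) = g K (coface K i)"
proof -
  have "didx (Suc K) \<in> Simp (strat_delta (Suc K) T) (Suc K)" using dmor_didx by (simp add: strat_delta_def)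
  from smap_act[OF assms dmor_coface this] show ?thesis
    unfolding face_def strat_delta_def using dcomp_didx_left[OF dmor_coface] by simp
qed

text \<open>A simplex a of the horn missing the vertex i lies in the i-th face; it is sent to the
  corresponding simplex of y i.\<close>
definition horn_map :: "nat \<Rightarrow> nat \<Rightarrow> (nat \<Rightarrow> 'a) \<Rightarrow> nat \<Rightarrow> (nat \<Rightarrow> nat) \<Rightarrow> 'a" where
  "horn_map K k y m a = Act X m (Suc K) (cofactor (horn_index k (Suc (Suc K)) m a) a)
     (y (horn_index k (Suc (Suc K)) m a))"

end

context pointed_wcs
begin

context
  fixes K k :: nat and y :: "nat \<Rightarrow> 'a"
  assumes horn_faces: "\<And>i. i \<le> Suc (Suc K) \<Longrightarrow> i \<noteq> k \<Longrightarrow> y i \<in> Simp X (Suc K)"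
    and horn_compat: "\<And>i r. i < r \<Longrightarrow> r \<le> Suc (Suc K) \<Longrightarrow> i \<noteq> k \<Longrightarrow> r \<noteq> k \<Longrightarrow>
        face K i (y r) = face K (r - 1) (y i)"
begin

lemma act_cofactor_horn_faces:
  assumes lt: "i < i'" and a: "dmor m (Suc (Suc K)) a"
    and i: "i \<noteq> k" "i \<notin> a ` {0..m}" and i': "i' \<le> Suc (Suc K)" "i' \<noteq> k" "i' \<notin> a ` {0..m}"
  shows "Act X m (Suc K) (cofactor i a) (y i) = Act X m (Suc K) (cofactor i' a) (y i')"
proof -
  have avoid: "a t \<noteq> i \<and> a t \<noteq> i'" if "t \<le> m" for t using that i i' by force
  have d: "dmor m (Suc K) (cofactor i a)" "dmor m (Suc K) (cofactor i' a)"
    using dmor_cofactor[OF a] i i' lt by auto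
  have "i' - 1 \<notin> cofactor i a ` {0..m}" "i \<notin> cofactor i' a ` {0..m}"
    using avoid lt unfolding cofactor_def by (fastforce split: if_splits)+
  then have "Act X m (Suc K) (cofactor i a) (y i)
      = Act X m K (cofactor (i' - 1) (cofactor i a)) (face K (i' - 1) (y i))"
    and "Act X m (Suc K) (cofactor i' a) (y i') = Act X m K (cofactor i (cofactor i' a)) (face K i (y i'))"
    using act_cofactor[OF horn_faces d(1)] act_cofactor[OF horn_faces d(2)] lt i i' by auto
  moreover have "face K (i' - 1) (y i) = face K i (y i')" using horn_compat[of i i'] lt i i' by simp
  moreover have "cofactor (i' - 1) (cofactor i a) = cofactor i (cofactor i' a)"
    using cofactor_cofactor[OF lt avoid a] .
  ultimately show ?thesis by simp
qed

lemma horn_map_eq: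
  assumes a: "a \<in> horn_simp k (Suc (Suc K)) m" and i: "i \<le> Suc (Suc K)" "i \<noteq> k" "i \<notin> a ` {0..m}"
  shows "horn_map K k y m a = Act X m (Suc K) (cofactor i a) (y i)"
proof -
  define j where "j = horn_index k (Suc (Suc K)) m a"
  have j: "j \<le> Suc (Suc K)" "j \<noteq> k" "j \<notin> a ` {0..m}" using horn_index[OF a] j_def by auto
  have "horn_map K k y m a = Act X m (Suc K) (cofactor j a) (y j)" unfolding horn_map_def j_def by simp
  also have "\<dots> = Act X m (Suc K) (cofactor i a) (y i)"
    using act_cofactor_horn_faces horn_simp_dmor[OF a] i j by (metis linorder_neq_iff)
  finally show ?thesis .
qed

lemma horn_map_coface:
  assumes "i \<le> Suc (Suc K)" "i \<noteq> k"
  shows "horn_map K k y (Suc K) (coface (Suc K) i) = y i"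
proof -
  have "i \<notin> coface (Suc K) i ` {0..Suc K}" by (auto simp: coface_def)
  then show ?thesis
    using horn_map_eq[OF coface_horn_simp[OF assms] assms] act_didx[OF horn_faces[OF assms]]
    by (simp add: cofactor_coface)
qed

lemma horn_mapE:
  assumes a: "a \<in> horn_simp k (Suc (Suc K)) m"
  obtains i where "i \<le> Suc (Suc K)" "i \<noteq> k" "i \<notin> a ` {0..m}" "horn_map K k y m a = Act X m (Suc K) (cofactor i a) (y i)"
    "dmor m (Suc K) (cofactor i a)" "(\<lambda>t. coface (Suc K) i (cofactor i a t)) ` {0..m} = a ` {0..m}"
proof -
  define i where "i = horn_index k (Suc (Suc K)) m a"
  have i: "i \<le> Suc (Suc K)" "i \<noteq> k" "i \<notin> a ` {0..m}" using horn_index[OF a] i_def by auto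
  show thesis
    using that[OF i horn_map_eq[OF a i] dmor_cofactor image_coface_cofactor]
      horn_simp_dmor[OF a] i by blast
qed

lemma smap_Delta_k'_of_horn_map:
  assumes g: "smap (Delta_k k (Suc (Suc K))) X g"
    and extends: "\<And>m a. a \<in> horn_simp k (Suc (Suc K)) m \<Longrightarrow> g m a = horn_map K k y m a"
    and thin_faces: "\<And>i. i \<le> Suc (Suc K) \<Longrightarrow> i \<noteq> k \<Longrightarrow> y i \<in> Thin X (Suc K)"
  shows "smap (Delta_k' k (Suc (Suc K))) X g"
  unfolding smap_def
proof (intro conjI allI impI)
  fix m a assume "a \<in> Simp (Delta_k' k (Suc (Suc K))) m"
  then show "g m a \<in> Simp X m" using smap_simp[OF g] unfolding Delta_k'_def by simp
next
  fix l m h a assume "dmor l m h" "a \<in> Simp (Delta_k' k (Suc (Suc K))) m"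
  then show "g l (Act (Delta_k' k (Suc (Suc K))) l m h a) = Act X l m h (g m a)"
    using smap_act[OF g] unfolding Delta_k'_def by simp
next
  fix m a assume "a \<in> Thin (Delta_k' k (Suc (Suc K))) m"
  moreover have "Thin (Delta_k' k (Suc (Suc K))) m = Thin (Delta_k k (Suc (Suc K))) m
      \<union> Thin (Lambda k (Suc (Suc K))) m \<union> (if m = Suc K then horn_simp k (Suc (Suc K)) m else {})"
    by (simp add: Delta_k'_def Lambda'_def Un_assoc)
  ultimately consider "a \<in> Thin (Delta_k k (Suc (Suc K))) m" | "a \<in> Thin (Lambda k (Suc (Suc K))) m"
    | "m = Suc K" "a \<in> horn_simp k (Suc (Suc K)) m"
    by (cases "m = Suc K") auto
  then show "g m a \<in> Thin X m"
  proof cases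
    case 1 then show ?thesis by (rule smap_thin[OF g])
  next
    case 2 then show ?thesis using smap_thin[OF g] unfolding Lambda_def by simp
  next
    case 3
    obtain i where i: "i \<le> Suc (Suc K)" "i \<noteq> k" "i \<notin> a ` {0..m}"
      and eq: "horn_map K k y m a = Act X m (Suc K) (cofactor i a) (y i)"
      and d: "dmor m (Suc K) (cofactor i a)"
      and "(\<lambda>t. coface (Suc K) i (cofactor i a t)) ` {0..m} = a ` {0..m}"
      by (rule horn_mapE[OF 3(2)])
    have yi: "y i \<in> Thin X (Suc K)" using thin_faces[OF i(1,2)] .
    consider t where "t < m" "cofactor i a t = cofactor i a (Suc t)"
      | "\<forall>t<m. cofactor i a t < cofactor i a (Suc t)"
      using dmor_repeat_or_strict[OF d] by blast
    then show ?thesis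
    proof cases
      case 1
      then show ?thesis using repeat_thin[OF d 1 thin_simp[OF yi]] eq extends[OF 3(2)] by simp
    next
      case 2
      then have "cofactor i a = didx (Suc K)"
        by (intro dmor_strict_endo_eq_didx) (use d 3(1) in auto)
      then show ?thesis using eq extends[OF 3(2)] act_didx[OF thin_simp[OF yi]] yi 3(1) by simp
    qed
  qed
qed

context
  assumes horn_thin: "\<And>i m u. i \<le> Suc (Suc K) \<Longrightarrow> i \<noteq> k \<Longrightarrow> i \<notin> hornset k (Suc (Suc K)) \<Longrightarrow>
      dmor m (Suc K) u \<Longrightarrow> hornset k (Suc (Suc K)) \<subseteq> (\<lambda>t. coface (Suc K) i (u t)) ` {0..m} \<Longrightarrow>
      Act X m (Suc K) u (y i) \<in> Thin X m"
begin

lemma horn_map_thin: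
  assumes "a \<in> Thin (Lambda k (Suc (Suc K))) m"
  shows "horn_map K k y m a \<in> Thin X m"
proof -
  from assms have a: "a \<in> horn_simp k (Suc (Suc K)) m" and thin: "a \<in> Thin (Delta_k k (Suc (Suc K))) m"
    unfolding Lambda_def by auto
  obtain i where i: "i \<le> Suc (Suc K)" "i \<noteq> k" and i_notin: "i \<notin> a ` {0..m}" and eq: "horn_map K k y m a = Act X m (Suc K) (cofactor i a) (y i)"
    and d: "dmor m (Suc K) (cofactor i a)"
    and img: "(\<lambda>t. coface (Suc K) i (cofactor i a t)) ` {0..m} = a ` {0..m}"
    using horn_mapE[OF a] by blast
  from thin consider "a \<in> dgn (Suc (Suc K)) m" | "hornset k (Suc (Suc K)) \<subseteq> a ` {0..m}"
    unfolding Delta_k_def strat_delta_def by auto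
  then show ?thesis
  proof cases
    case 1
    then obtain t where "t < m" "a t = a (Suc t)" using dgn_repeat by blast
    then show ?thesis using repeat_thin[OF d, of t] horn_faces[OF i] eq by (simp add: cofactor_def)
  next
    case 2
    then have "i \<notin> hornset k (Suc (Suc K))" using i_notin by blast
    then show ?thesis using horn_thin[OF i _ d] 2 img eq by simp
  qed
qed

lemma smap_horn_map: "smap (Lambda k (Suc (Suc K))) X (horn_map K k y)"
  unfolding smap_def
proof (intro conjI allI impI)
  fix m a assume "a \<in> Simp (Lambda k (Suc (Suc K))) m"
  then have a: "a \<in> horn_simp k (Suc (Suc K)) m" unfolding Lambda_def by simp
  then obtain i where "i \<le> Suc (Suc K)" "i \<noteq> k" "i \<notin> a ` {0..m}"
    "horn_map K k y m a = Act X m (Suc K) (cofactor i a) (y i)" "dmor m (Suc K) (cofactor i a)"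
    by (rule horn_mapE)
  then show "horn_map K k y m a \<in> Simp X m" using act_simp horn_faces by simp
next
  fix l m g a assume g: "dmor l m g" and "a \<in> Simp (Lambda k (Suc (Suc K))) m"
  then have a: "a \<in> horn_simp k (Suc (Suc K)) m" unfolding Lambda_def by simp
  define i where "i = horn_index k (Suc (Suc K)) m a"
  have i: "i \<le> Suc (Suc K)" "i \<noteq> k" "i \<notin> a ` {0..m}" using horn_index[OF a] i_def by auto
  have ag: "dcomp l a g \<in> horn_simp k (Suc (Suc K)) l"
    using i not_in_image_dcomp[OF i(3) g] dmor_dcomp[OF g horn_simp_dmor[OF a]]
    unfolding horn_simp_def by blast
  have d: "dmor m (Suc K) (cofactor i a)" using dmor_cofactor horn_simp_dmor[OF a] i by simp
  have "horn_map K k y l (dcomp l a g) = Act X l (Suc K) (cofactor i (dcomp l a g)) (y i)"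
    using horn_map_eq[OF ag i(1,2) not_in_image_dcomp[OF i(3) g]] .
  also have "\<dots> = Act X l m g (Act X m (Suc K) (cofactor i a) (y i))"
    using act_dcomp[OF g d horn_faces[OF i(1,2)]] by (simp add: cofactor_dcomp)
  also have "Act X m (Suc K) (cofactor i a) (y i) = horn_map K k y m a"
    unfolding horn_map_def i_def by simp
  finally show "horn_map K k y l (Act (Lambda k (Suc (Suc K))) l m g a) = Act X l m g (horn_map K k y m a)"
    unfolding Lambda_def by simp
next
  fix m a assume "a \<in> Thin (Lambda k (Suc (Suc K))) m"
  then show "horn_map K k y m a \<in> Thin X m" by (rule horn_map_thin)
qed

text \<open>The horn \<Lambda>^k[K+2] is filled by extending along \<Lambda>^k[K+2] \<subseteq> \<Delta>^k[K+2]; if the given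
  faces are thin, the extension along \<Delta>^k[K+2]' \<subseteq> \<Delta>^k[K+2]'' makes the k-th face thin.\<close>
lemma horn_fill:
  assumes k: "k \<le> Suc (Suc K)"
  obtains z where "z \<in> Thin X (Suc (Suc K))"
    "\<And>i. i \<le> Suc (Suc K) \<Longrightarrow> i \<noteq> k \<Longrightarrow> face (Suc K) i z = y i"
    "(\<forall>i \<le> Suc (Suc K). i \<noteq> k \<longrightarrow> y i \<in> Thin X (Suc K)) \<longrightarrow> face (Suc K) k z \<in> Thin X (Suc K)"
proof -
  have "rlp X (Lambda k (Suc (Suc K))) (Delta_k k (Suc (Suc K)))"
    using weak_complicial k unfolding weak_complicial_def by simp
  then obtain g where g: "smap (Delta_k k (Suc (Suc K))) X g"
    and g_ext: "\<And>m a. a \<in> Simp (Lambda k (Suc (Suc K))) m \<Longrightarrow> g m a = horn_map K k y m a"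
    using smap_horn_map unfolding rlp_def by blast
  have extends: "g m a = horn_map K k y m a" if "a \<in> horn_simp k (Suc (Suc K)) m" for m a
    using g_ext that unfolding Lambda_def by simp
  define z where "z = g (Suc (Suc K)) (didx (Suc (Suc K)))"
  have "didx (Suc (Suc K)) \<in> Thin (Delta_k k (Suc (Suc K))) (Suc (Suc K))"
    using dmor_didx by (auto simp: Delta_k_def strat_delta_def hornset_def didx_def image_iff)
  then have z_thin: "z \<in> Thin X (Suc (Suc K))" unfolding z_def by (rule smap_thin[OF g])
  have z_face: "face (Suc K) i z = g (Suc K) (coface (Suc K) i)" for i
    unfolding z_def using face_smap_didx g unfolding Delta_k_def by blast
  have z_faces: "face (Suc K) i z = y i" if "i \<le> Suc (Suc K)" "i \<noteq> k" for i
    using z_face extends[OF coface_horn_simp[OF that]] horn_map_coface[OF that] by simp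
  have "face (Suc K) k z \<in> Thin X (Suc K)"
    if "\<forall>i \<le> Suc (Suc K). i \<noteq> k \<longrightarrow> y i \<in> Thin X (Suc K)"
  proof -
    have thin_faces: "y i \<in> Thin X (Suc K)" if "i \<le> Suc (Suc K)" "i \<noteq> k" for i
      using that \<open>\<forall>i \<le> Suc (Suc K). i \<noteq> k \<longrightarrow> y i \<in> Thin X (Suc K)\<close> by blast
    have "rlp X (Delta_k' k (Suc (Suc K))) (Delta_k'' k (Suc (Suc K)))"
      using weak_complicial k unfolding weak_complicial_def by simp
    then obtain g' where g': "smap (Delta_k'' k (Suc (Suc K))) X g'"
      and g'g: "\<And>m a. a \<in> Simp (Delta_k' k (Suc (Suc K))) m \<Longrightarrow> g' m a = g m a"
      using smap_Delta_k'_of_horn_map[OF g extends thin_faces] unfolding rlp_def by blast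
    have "coface (Suc K) k \<in> Thin (Delta_k'' k (Suc (Suc K))) (Suc K)"
      unfolding Delta_k''_def using dmor_coface by (simp add: Delta_k_def strat_delta_def)
    then have "g' (Suc K) (coface (Suc K) k) \<in> Thin X (Suc K)" by (rule smap_thin[OF g'])
    moreover have "coface (Suc K) k \<in> Simp (Delta_k' k (Suc (Suc K))) (Suc K)"
      using dmor_coface by (simp add: Delta_k'_def Delta_k_def strat_delta_def)
    ultimately show ?thesis using z_face g'g by simp
  qed
  then show thesis using that z_thin z_faces by blast
qed

end

end

end

section \<open>Witnesses and tetrahedra\<close>

text \<open>M a b (a < b \<le> 3) stands for the common face of the faces j + a and j + b of an
  (n+2)-simplex; subface M r s is then the face j + s of its face j + r.\<close>
definition subface :: "(nat \<Rightarrow> nat \<Rightarrow> 'a) \<Rightarrow> nat \<Rightarrow> nat \<Rightarrow> 'a" where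
  "subface M r s = (if s < r then M s r else M r (Suc s))"

definition tetra_subface :: "'a \<Rightarrow> nat \<Rightarrow> (nat \<Rightarrow> nat \<Rightarrow> 'a) \<Rightarrow> nat \<Rightarrow> nat \<Rightarrow> 'a" where
  "tetra_subface v j M a b =
     (if j \<le> b \<and> b \<le> j + 3 \<and> j \<le> a \<and> a \<le> j + 2 then subface M (b - j) (a - j) else v)"

lemma tetra_subface_compat: "i < r \<Longrightarrow> tetra_subface v j M i r = tetra_subface v j M (r - 1) i"
  unfolding tetra_subface_def subface_def by (auto simp: Suc_diff_Suc)

lemma tetra_subface_outside_horn:
  assumes k': "k' \<le> 3" and outer0: "k' = 0 \<Longrightarrow> M 2 3 = v" and outer3: "k' = 3 \<Longrightarrow> M 0 1 = v"
    and i: "i \<le> Suc (Suc N)" "i \<notin> hornset (j + k') (Suc (Suc N))"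
    and s: "s \<le> Suc N" "coface (Suc N) i s \<notin> hornset (j + k') (Suc (Suc N))"
  shows "tetra_subface v j M s i = v"
proof (cases "j \<le> i \<and> i \<le> j + 3 \<and> j \<le> s \<and> s \<le> j + 2")
  case True
  define p q where "p = s - j" and "q = i - j"
  define w where "w = (if p < q then p else Suc p)"
  have sp: "s = j + p" and iq: "i = j + q" using True p_def q_def by auto
  have cw: "coface (Suc N) i s = j + w" unfolding coface_def w_def using sp iq s(1) by auto
  have "\<not> (Suc w = k' \<or> w = k' \<or> w = Suc k')"
    using s(2) cw i(1) s(1) unfolding hornset_def coface_def by (auto split: if_splits)
  moreover have "\<not> (Suc q = k' \<or> q = k' \<or> q = Suc k')" using i iq unfolding hornset_def by auto
  moreover have "w \<noteq> q" "w \<le> 3" "q \<le> 3" using True p_def q_def w_def by auto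
  ultimately have "(k' = 0 \<and> w = 2 \<and> q = 3) \<or> (k' = 0 \<and> w = 3 \<and> q = 2)
      \<or> (k' = 3 \<and> w = 0 \<and> q = 1) \<or> (k' = 3 \<and> w = 1 \<and> q = 0)"
    using k' by presburger
  then show ?thesis
    using outer0 outer3 True unfolding tetra_subface_def subface_def p_def q_def w_def
    by (auto split: if_splits simp: numeral_eq_Suc)
qed (auto simp: tetra_subface_def)

definition tetra_edges :: "'a \<Rightarrow> 'a \<Rightarrow> 'a \<Rightarrow> 'a \<Rightarrow> 'a \<Rightarrow> 'a \<Rightarrow> nat \<Rightarrow> nat \<Rightarrow> 'a" where
  "tetra_edges m01 m02 m03 m12 m13 m23 a b =
    (if a = 0 \<and> b = 1 then m01 else if a = 0 \<and> b = 2 then m02 else if a = 0 \<and> b = 3 then m03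
     else if a = 1 \<and> b = 2 then m12 else if a = 1 \<and> b = 3 then m13 else m23)"

lemma subface_tetra_edges:
  "subface (tetra_edges m01 m02 m03 m12 m13 m23) 0 0 = m01"
  "subface (tetra_edges m01 m02 m03 m12 m13 m23) 0 1 = m02"
  "subface (tetra_edges m01 m02 m03 m12 m13 m23) 0 2 = m03"
  "subface (tetra_edges m01 m02 m03 m12 m13 m23) 1 0 = m01"
  "subface (tetra_edges m01 m02 m03 m12 m13 m23) 1 1 = m12"
  "subface (tetra_edges m01 m02 m03 m12 m13 m23) 1 2 = m13"
  "subface (tetra_edges m01 m02 m03 m12 m13 m23) 2 0 = m02"
  "subface (tetra_edges m01 m02 m03 m12 m13 m23) 2 1 = m12"
  "subface (tetra_edges m01 m02 m03 m12 m13 m23) 2 2 = m23"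
  "subface (tetra_edges m01 m02 m03 m12 m13 m23) 3 0 = m03"
  "subface (tetra_edges m01 m02 m03 m12 m13 m23) 3 1 = m13"
  "subface (tetra_edges m01 m02 m03 m12 m13 m23) 3 2 = m23"
  unfolding subface_def tetra_edges_def by (simp_all add: numeral_eq_Suc)

locale pointed_wcs_dim = pointed_wcs +
  fixes n :: nat
  assumes dim_pos: "1 \<le> n"
begin

abbreviation base :: 'a where "base \<equiv> vconst X n x"

definition face_pattern :: "nat \<Rightarrow> 'a \<Rightarrow> 'a \<Rightarrow> 'a \<Rightarrow> nat \<Rightarrow> 'a" where
  "face_pattern j a b c i =
     (if i = j then a else if i = Suc j then b else if i = Suc (Suc j) then c else base)"

definition witness :: "nat \<Rightarrow> 'a \<Rightarrow> 'a \<Rightarrow> 'a \<Rightarrow> 'a \<Rightarrow> bool" where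
  "witness j h a b c \<longleftrightarrow> h \<in> Thin X (Suc n) \<and> (\<forall>i \<le> Suc n. face n i h = face_pattern j a b c i)"

lemma witness_Suc: "witness j h base c d = witness (Suc j) h c d base"
proof -
  have "face_pattern j base c d = face_pattern (Suc j) c d base"
    unfolding face_pattern_def by (rule ext) simp
  then show ?thesis unfolding witness_def by simp
qed

lemma face_face_tetra:
  assumes z: "z \<in> Simp X (Suc (Suc n))" and j: "Suc j \<le> n" and k': "k' \<le> 3"
    and faces: "\<And>a b. a \<le> Suc n \<Longrightarrow> b \<le> Suc (Suc n) \<Longrightarrow> b \<noteq> j + k' \<Longrightarrow>
      face n a (face (Suc n) b z) = tetra_subface base j M a b"
    and s: "s \<le> Suc n"
  shows "face n s (face (Suc n) (j + k') z) = face_pattern j (subface M k' 0) (subface M k' 1) (subface M k' 2) s"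
proof (cases "s < j + k'")
  case True
  then have "face n s (face (Suc n) (j + k') z) = face n (j + k' - 1) (face (Suc n) s z)"
    using face_face[OF True _ z] j k' by simp
  also have "\<dots> = tetra_subface base j M (j + k' - 1) s" using faces True s j k' by simp
  finally show ?thesis
    using True k' unfolding tetra_subface_def face_pattern_def subface_def by (auto simp: numeral_eq_Suc)
next
  case False
  then have "face n s (face (Suc n) (j + k') z) = face n (j + k') (face (Suc n) (Suc s) z)"
    using face_face[of "j + k'" "Suc s" n z] z s by simp
  also have "\<dots> = tetra_subface base j M (j + k') (Suc s)" using faces False s j k' by simp
  finally show ?thesis
    using False k' unfolding tetra_subface_def face_pattern_def subface_def by (auto simp: numeral_eq_Suc)
qed

definition tetra_family :: "(nat \<Rightarrow> 'a) \<Rightarrow> nat \<Rightarrow> nat \<Rightarrow> 'a" where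
  "tetra_family \<Phi> j i = (if j \<le> i \<and> i \<le> j + 3 then \<Phi> (i - j) else vconst X (Suc n) x)"

context
  fixes j k' :: nat and M :: "nat \<Rightarrow> nat \<Rightarrow> 'a" and \<Phi> :: "nat \<Rightarrow> 'a"
  assumes j: "Suc j \<le> n" and k': "k' \<le> 3"
    and W: "\<And>r. r \<le> 3 \<Longrightarrow> r \<noteq> k' \<Longrightarrow> witness j (\<Phi> r) (subface M r 0) (subface M r 1) (subface M r 2)"
begin

lemma face_tetra_family:
  assumes "a \<le> Suc n" "b \<noteq> j + k'"
  shows "face n a (tetra_family \<Phi> j b) = tetra_subface base j M a b"
proof (cases "j \<le> b \<and> b \<le> j + 3")
  case True
  then have "b - j \<le> 3" "b - j \<noteq> k'" using assms by auto
  from W[OF this] have "face n a (\<Phi> (b - j)) = face_pattern j (subface M (b - j) 0) (subface M (b - j) 1) (subface M (b - j) 2) a"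
    using assms(1) unfolding witness_def by blast
  then show ?thesis
    using True unfolding tetra_family_def tetra_subface_def face_pattern_def by (auto simp: numeral_eq_Suc)
qed (use face_vconst in \<open>auto simp: tetra_family_def tetra_subface_def\<close>)

lemma tetra_family_thin:
  assumes "i \<le> Suc (Suc n)" "i \<noteq> j + k'"
  shows "tetra_family \<Phi> j i \<in> Thin X (Suc n)"
proof (cases "j \<le> i \<and> i \<le> j + 3")
  case True
  then have "i - j \<le> 3" "i - j \<noteq> k'" using assms(2) by auto
  with True show ?thesis using W unfolding tetra_family_def witness_def by simp
next
  case False
  then show ?thesis unfolding tetra_family_def if_not_P[OF False] by (simp add: vconst_thin)
qed

lemma tetra_family_horn_thin:
  assumes outer0: "k' = 0 \<Longrightarrow> M 2 3 = base" and outer3: "k' = 3 \<Longrightarrow> M 0 1 = base"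
    and i: "i \<le> Suc (Suc n)" "i \<noteq> j + k'" "i \<notin> hornset (j + k') (Suc (Suc n))"
    and u: "dmor m (Suc n) u" and H: "hornset (j + k') (Suc (Suc n)) \<subseteq> (\<lambda>t. coface (Suc n) i (u t)) ` {0..m}"
  shows "Act X m (Suc n) u (tetra_family \<Phi> j i) \<in> Thin X m"
proof -
  obtain a b where "a \<noteq> b" "a \<in> hornset (j + k') (Suc (Suc n))" "b \<in> hornset (j + k') (Suc (Suc n))"
    using hornset_two[of "j + k'" "Suc (Suc n)"] j k' by auto
  then have m: "1 \<le> m"
    using pos_if_two_values[of a b "\<lambda>t. coface (Suc n) i (u t)" m] subsetD[OF H] by blast
  show ?thesis
  proof (rule thin_act_of_faces_vconst[OF tetra_family_thin[OF i(1,2)] m u])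
    fix s assume s: "s \<le> Suc n" "s \<notin> u ` {0..m}"
    have "coface (Suc n) i s \<notin> hornset (j + k') (Suc (Suc n))"
    proof
      assume "coface (Suc n) i s \<in> hornset (j + k') (Suc (Suc n))"
      then obtain t where t: "t \<le> m" "coface (Suc n) i s = coface (Suc n) i (u t)" using H by force
      then have "s = u t" using coface_inj s(1) dmor_le[OF u t(1)] by blast
      then show False using s(2) t(1) by auto
    qed
    then show "face n s (tetra_family \<Phi> j i) = vconst X n x"
      using face_tetra_family[OF s(1) i(2)] tetra_subface_outside_horn[OF k' outer0 outer3 i(1) i(3) s(1)]
      by simp
  qed
qed

text \<open>Filling a horn of dimension n + 2 whose faces j, ..., j + 3 are witnesses (all other
  faces constant) yields the missing witness. For an outer horn (k' = 0 or 3) the thinness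
  condition of the horn also involves the shared face M 2 3 (resp. M 0 1), which must therefore
  be constant.\<close>
lemma tetra:
  assumes outer0: "k' = 0 \<Longrightarrow> M 2 3 = base" and outer3: "k' = 3 \<Longrightarrow> M 0 1 = base"
  shows "\<exists>h. witness j h (subface M k' 0) (subface M k' 1) (subface M k' 2)"
proof -
  obtain z where z: "z \<in> Thin X (Suc (Suc n))"
    "\<And>i. i \<le> Suc (Suc n) \<Longrightarrow> i \<noteq> j + k' \<Longrightarrow> face (Suc n) i z = tetra_family \<Phi> j i"
    "(\<forall>i \<le> Suc (Suc n). i \<noteq> j + k' \<longrightarrow> tetra_family \<Phi> j i \<in> Thin X (Suc n)) \<longrightarrow>
      face (Suc n) (j + k') z \<in> Thin X (Suc n)"
  proof (rule horn_fill[of n "j + k'" "tetra_family \<Phi> j"])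
    show "tetra_family \<Phi> j i \<in> Simp X (Suc n)" if "i \<le> Suc (Suc n)" "i \<noteq> j + k'" for i
      using tetra_family_thin[OF that] thin_simp by blast
    show "face n i (tetra_family \<Phi> j r) = face n (r - 1) (tetra_family \<Phi> j i)"
      if "i < r" "r \<le> Suc (Suc n)" "i \<noteq> j + k'" "r \<noteq> j + k'" for i r
      using that face_tetra_family tetra_subface_compat by simp
    show "j + k' \<le> Suc (Suc n)" using j k' by simp
  qed (use tetra_family_horn_thin[OF outer0 outer3] that in blast)+
  have "face n s (face (Suc n) (j + k') z) = face_pattern j (subface M k' 0) (subface M k' 1) (subface M k' 2) s"
    if "s \<le> Suc n" for s
    using face_face_tetra[OF thin_simp[OF z(1)] j k' _ that] z(2) face_tetra_family by simp
  moreover have "face (Suc n) (j + k') z \<in> Thin X (Suc n)" using z(3) tetra_family_thin by blast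
  ultimately show ?thesis unfolding witness_def by blast
qed

end

lemma witness_tetra:
  assumes j: "Suc j \<le> n" and k': "k' \<le> 3"
    and outer0: "k' = 0 \<Longrightarrow> m23 = base" and outer3: "k' = 3 \<Longrightarrow> m01 = base"
    and W0: "k' \<noteq> 0 \<Longrightarrow> \<exists>h. witness j h m01 m02 m03"
    and W1: "k' \<noteq> 1 \<Longrightarrow> \<exists>h. witness j h m01 m12 m13"
    and W2: "k' \<noteq> 2 \<Longrightarrow> \<exists>h. witness j h m02 m12 m23"
    and W3: "k' \<noteq> 3 \<Longrightarrow> \<exists>h. witness j h m03 m13 m23"
  defines "M \<equiv> tetra_edges m01 m02 m03 m12 m13 m23"
  shows "\<exists>h. witness j h (subface M k' 0) (subface M k' 1) (subface M k' 2)"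
proof -
  have "\<forall>r. \<exists>h. r \<le> 3 \<longrightarrow> r \<noteq> k' \<longrightarrow> witness j h (subface M r 0) (subface M r 1) (subface M r 2)"
  proof
    fix r :: nat
    consider "r = 0" | "r = 1" | "r = 2" | "r = 3" | "3 < r" by linarith
    then show "\<exists>h. r \<le> 3 \<longrightarrow> r \<noteq> k' \<longrightarrow> witness j h (subface M r 0) (subface M r 1) (subface M r 2)"
      by cases (use W0 W1 W2 W3 in \<open>auto simp: M_def subface_def tetra_edges_def numeral_eq_Suc\<close>)
  qed
  then obtain \<Phi> where \<Phi>: "\<And>r. r \<le> 3 \<Longrightarrow> r \<noteq> k' \<Longrightarrow> witness j (\<Phi> r) (subface M r 0) (subface M r 1) (subface M r 2)"
    by metis
  show ?thesis
    by (rule tetra[OF j k' \<Phi>]) (use outer0 outer3 in \<open>simp_all add: M_def tetra_edges_def\<close>)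
qed

end

section \<open>The witness relations\<close>

context pointed_wcs_dim
begin

abbreviation bc :: "'a \<Rightarrow> bool" where "bc a \<equiv> bdry_const X n x a"

lemma bc_simp: "bc a \<Longrightarrow> a \<in> Simp X n"
  unfolding bdry_const_def by simp

lemma witness_simp: "witness j h a b c \<Longrightarrow> h \<in> Simp X (Suc n)"
  unfolding witness_def using thin_simp by blast

lemma witness_face: "witness j h a b c \<Longrightarrow> i \<le> Suc n \<Longrightarrow> face n i h = face_pattern j a b c i"
  unfolding witness_def by blast

lemma witness_refl:
  assumes c: "bc c" and j: "j \<le> n"
  shows "\<exists>h. witness j h c c base"
proof -
  define h where "h = Act X (Suc n) n (codegeneracy (Suc n) j) c"
  have d: "dmor (Suc n) n (codegeneracy (Suc n) j)" by (rule dmor_codegeneracy[OF j])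
  have "h \<in> Thin X (Suc n)"
    unfolding h_def by (rule repeat_thin[OF d, of j]) (use j bc_simp[OF c] in \<open>auto simp: codegeneracy_def\<close>)
  moreover have "face n i h = face_pattern j c c base i" if i: "i \<le> Suc n" for i
  proof -
    have "face n i h = Act X n n (dcomp n (codegeneracy (Suc n) j) (coface n i)) c"
      unfolding face_def h_def using act_dcomp[OF dmor_coface d bc_simp[OF c]] by simp
    then show ?thesis
      using dcomp_codegeneracy_coface_didx[OF j] dcomp_codegeneracy_coface_bdry[OF j i]
        act_didx[OF bc_simp[OF c]] c
      unfolding face_pattern_def bdry_const_def by auto
  qed
  ultimately show ?thesis unfolding witness_def by blast
qed

text \<open>For j = n the third face lies outside [n+1], so hrel n a b asks for a thin
  (n+1)-simplex with faces a, b in positions n, n+1 and all other faces constant.\<close>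
definition hrel :: "nat \<Rightarrow> 'a \<Rightarrow> 'a \<Rightarrow> bool" where
  "hrel j a b \<longleftrightarrow> bc a \<and> bc b \<and> (\<exists>h. witness j h a b base)"

lemma hrel_Suc: "hrel (Suc j) a b \<longleftrightarrow> bc a \<and> bc b \<and> (\<exists>h. witness j h base a b)"
  unfolding hrel_def witness_Suc ..

lemma hrel_Suc_swap:
  assumes j: "Suc j \<le> n" and "hrel j c d"
  shows "hrel (Suc j) d c"
proof -
  let ?M = "tetra_edges base c c d c base"
  have c: "bc c" and d: "bc d" and W2: "\<exists>h. witness j h c d base" using assms(2) unfolding hrel_def by auto
  have W0: "\<exists>h. witness j h base c c" using witness_refl[OF c] j witness_Suc by simp
  have "\<exists>h. witness j h (subface ?M 1 0) (subface ?M 1 1) (subface ?M 1 2)"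
    by (rule witness_tetra[OF j]) (use W0 W2 witness_refl[OF c] j in simp_all)
  then show ?thesis using c d unfolding hrel_Suc subface_tetra_edges by blast
qed

lemma hrel_down:
  assumes j: "Suc j \<le> n" and "hrel (Suc j) c d"
  shows "hrel j c d"
proof -
  let ?M = "tetra_edges base c d d d base"
  have c: "bc c" and d: "bc d" and W0: "\<exists>h. witness j h base c d" using assms(2) unfolding hrel_Suc by auto
  have W1: "\<exists>h. witness j h base d d" using witness_refl[OF d] j witness_Suc by simp
  have "\<exists>h. witness j h (subface ?M 2 0) (subface ?M 2 1) (subface ?M 2 2)"
    by (rule witness_tetra[OF j]) (use W0 W1 witness_refl[OF d] j in simp_all)
  then show ?thesis using c d unfolding hrel_def subface_tetra_edges by blast
qed

lemma hrel_down_euclidean: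
  assumes j: "Suc j \<le> n" and "hrel (Suc j) c d" "hrel (Suc j) c e"
  shows "hrel j d e"
proof -
  let ?M = "tetra_edges base c d c e base"
  have c: "bc c" and d: "bc d" and e: "bc e"
    and W0: "\<exists>h. witness j h base c d" and W1: "\<exists>h. witness j h base c e"
    using assms(2,3) unfolding hrel_Suc by auto
  have "\<exists>h. witness j h (subface ?M 3 0) (subface ?M 3 1) (subface ?M 3 2)"
    by (rule witness_tetra[OF j]) (use W0 W1 witness_refl[OF c] j in simp_all)
  then show ?thesis using d e unfolding hrel_def subface_tetra_edges by blast
qed

lemma hrel_sym_below: "Suc j \<le> n \<Longrightarrow> hrel j a b \<Longrightarrow> hrel j b a"
  using hrel_Suc_swap hrel_down by blast

lemma hrel_up: "Suc j \<le> n \<Longrightarrow> hrel j a b \<Longrightarrow> hrel (Suc j) a b"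
  using hrel_Suc_swap hrel_sym_below by blast

lemma hrel_eq_top: "j \<le> n \<Longrightarrow> hrel j a b \<longleftrightarrow> hrel n a b"
proof (induction "n - j" arbitrary: j)
  case (Suc d)
  then have "hrel (Suc j) a b \<longleftrightarrow> hrel n a b" by simp
  then show ?case using Suc hrel_up hrel_down by (metis Suc_leI diff_is_0_eq' le_neq_implies_less nat.distinct(1))
qed simp

lemma hrel_top_sym: "hrel n a b \<Longrightarrow> hrel n b a"
  using hrel_eq_top[of "n - 1"] hrel_sym_below[of "n - 1"] dim_pos by simp

lemma hrel_top_trans:
  assumes "hrel n a b" "hrel n b c"
  shows "hrel n a c"
proof -
  obtain j where j: "n = Suc j" using dim_pos by (cases n) auto
  then have "hrel j a c" using hrel_down_euclidean[of j b a c] hrel_top_sym assms by simp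
  then show ?thesis using hrel_eq_top[of j] j by simp
qed

lemma hrel_chain:
  assumes "\<And>j. j \<le> n \<Longrightarrow> hrel j (e j) (e (Suc j))"
  shows "hrel n (e 0) (e (Suc n))"
proof -
  have "hrel n (e 0) (e (Suc j))" if "j \<le> n" for j
    using that
  proof (induction j)
    case 0 then show ?case using assms hrel_eq_top by blast
  next
    case (Suc j)
    then show ?case using assms hrel_eq_top hrel_top_trans by (metis Suc_leD)
  qed
  then show ?thesis by simp
qed

lemma witness_bdry_const:
  assumes W: "witness j h a b c" and j: "Suc j \<le> n" and a: "bc a" and c: "bc c"
  shows "bc b"
proof -
  obtain K where K: "n = Suc K" using dim_pos by (cases n) auto
  have h: "h \<in> Simp X (Suc (Suc K))" using witness_simp[OF W] K by simp
  have hf: "face (Suc K) i h = (if i = j then a else if i = Suc j then b else if i = Suc (Suc j) then c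
      else vconst X (Suc K) x)" if "i \<le> Suc (Suc K)" for i
    using witness_face[OF W, of i] that K unfolding face_pattern_def by simp
  have b: "b = face (Suc K) (Suc j) h" using hf[of "Suc j"] j K by simp
  have const: "face K s v = vconst X K x" if "bc v" "s \<le> Suc K" for v s
    using that bdry_const_iff_faces[of v K] bc_simp K by simp
  have "face K s b = vconst X K x" if s: "s \<le> Suc K" for s
  proof (cases "s < Suc j")
    case True
    then have "face K s b = face K j (face (Suc K) s h)" using face_face[OF True _ h] b j K by simp
    then show ?thesis
      using hf[of s] s True const[OF a, of j] face_vconst j K by auto
  next
    case False
    then have "face K s b = face K (Suc j) (face (Suc K) (Suc s) h)"
      using face_face[of "Suc j" "Suc s" K h] h s b by simp
    then show ?thesis
      using hf[of "Suc s"] s False const[OF c, of "Suc j"] face_vconst j K by auto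
  qed
  then show ?thesis using bdry_const_iff_faces[OF face_simp[OF h]] b K by simp
qed

end

section \<open>Homotopies and prisms\<close>

lemma sprod_Delta_simp:
  "p \<in> Simp (sprod (Delta n) (Delta_t 1)) m \<longleftrightarrow> dmor m n (fst p) \<and> dmor m 1 (snd p)"
  unfolding sprod_def Delta_def Delta_t_def strat_delta_def by (cases p) simp

lemma sprod_Delta_act:
  "Act (sprod (Delta n) (Delta_t 1)) l m g p = (dcomp l (fst p) g, dcomp l (snd p) g)"
  unfolding sprod_def Delta_def Delta_t_def strat_delta_def by simp

lemma sprod_Delta_thin:
  assumes "p \<in> Thin (sprod (Delta n) (Delta_t 1)) m"
  shows "fst p \<in> dgn n m" "dmor m 1 (snd p)"
proof -
  have "fst p \<in> Thin (Delta n) m" and t: "snd p \<in> Thin (Delta_t 1) m"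
    using assms unfolding sprod_def by (cases p; simp)+
  then show "fst p \<in> dgn n m" unfolding Delta_def strat_delta_def by simp
  have "snd p \<in> dgn 1 m \<or> (m = 1 \<and> snd p = didx 1)"
    using t unfolding Delta_t_def strat_delta_def by (auto split: if_splits)
  then show "dmor m 1 (snd p)" using dgn_dmor dmor_didx by auto
qed

definition step :: "nat \<Rightarrow> nat \<Rightarrow> nat \<Rightarrow> nat" where
  "step m j = (\<lambda>t. if t \<le> m then (if t < j then 0 else 1) else 0)"

lemma dmor_step: "dmor m 1 (step m j)"
  unfolding dmor_def step_def by auto

lemma dcomp_step_coface: "i = j \<or> i = Suc j \<Longrightarrow> dcomp n (step (Suc n) (Suc j)) (coface n i) = step n i"
  unfolding dcomp_def step_def coface_def by (rule ext) auto

lemma step_thin: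
  assumes "1 \<le> n"
  shows "step (Suc n) (Suc j) \<in> Thin (Delta_t 1) (Suc n)"
proof -
  have "1 < Suc n" using assms by simp
  then show ?thesis
    unfolding Delta_t_def strat_delta_def dgn_def degenerate_def
    using dmor_step dcomp_didx_left[OF dmor_step] dmor_didx[of 1] by fastforce
qed

lemma codegeneracy_thin: "j \<le> n \<Longrightarrow> codegeneracy (Suc n) j \<in> Thin (Delta n) (Suc n)"
  unfolding Delta_def strat_delta_def dgn_def degenerate_def
  using dmor_codegeneracy dcomp_didx_left[OF dmor_codegeneracy] dmor_didx[of n] by fastforce

context pointed_wcs_dim
begin

context
  fixes H :: "nat \<Rightarrow> (nat \<Rightarrow> nat) \<times> (nat \<Rightarrow> nat) \<Rightarrow> 'a"
  assumes H: "smap (sprod (Delta n) (Delta_t 1)) X H"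
    and H_bdry: "\<And>m b t. b \<in> Simp (bdry n) m \<Longrightarrow> dmor m 1 t \<Longrightarrow> H m (b, t) = vconst X m x"
begin

lemma homotopy_act: "dmor l m g \<Longrightarrow> dmor m n a \<Longrightarrow> dmor m 1 t \<Longrightarrow>
    H l (dcomp l a g, dcomp l t g) = Act X l m g (H m (a, t))"
proof -
  assume "dmor l m g" "dmor m n a" "dmor m 1 t"
  moreover from this have "(a, t) \<in> Simp (sprod (Delta n) (Delta_t 1)) m" unfolding sprod_Delta_simp by simp
  ultimately show ?thesis using smap_act[OF H] unfolding sprod_Delta_act by fastforce
qed

lemma homotopy_slice_bc: "bc (H n (didx n, step n j))"
  unfolding bdry_const_def
proof (intro conjI allI impI)
  have "(didx n, step n j) \<in> Simp (sprod (Delta n) (Delta_t 1)) n"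
    unfolding sprod_Delta_simp using dmor_didx dmor_step by simp
  then show "H n (didx n, step n j) \<in> Simp X n" by (rule smap_simp[OF H])
next
  fix m g assume g: "g \<in> Simp (bdry n) m"
  then have gd: "dmor m n g" unfolding bdry_def by simp
  have "Act X m n g (H n (didx n, step n j)) = H m (g, dcomp m (step n j) g)"
    using homotopy_act[OF gd dmor_didx dmor_step] dcomp_didx_left[OF gd] by simp
  then show "Act X m n g (H n (didx n, step n j)) = vconst X m x"
    using H_bdry[OF g dmor_dcomp[OF gd dmor_step]] by simp
qed

text \<open>The (n+1)-simplices (codegeneracy j, step (j+1)) of the prism \<Delta>[n] \<times> \<Delta>[1] are thin,
  and their images under H witness the relation between consecutive slices.\<close>
lemma homotopy_slice_hrel:
  assumes j: "j \<le> n"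
  shows "hrel j (H n (didx n, step n j)) (H n (didx n, step n (Suc j)))"
proof -
  define h where "h = H (Suc n) (codegeneracy (Suc n) j, step (Suc n) (Suc j))"
  have "h \<in> Thin X (Suc n)"
    unfolding h_def using smap_thin[OF H] codegeneracy_thin[OF j] step_thin[OF dim_pos]
    by (simp add: sprod_def)
  moreover have "face n i h = face_pattern j (H n (didx n, step n j)) (H n (didx n, step n (Suc j))) base i"
    if i: "i \<le> Suc n" for i
  proof -
    have "face n i h = H n (dcomp n (codegeneracy (Suc n) j) (coface n i), dcomp n (step (Suc n) (Suc j)) (coface n i))"
      unfolding face_def h_def using homotopy_act[OF dmor_coface dmor_codegeneracy[OF j] dmor_step] by simp
    moreover have "H n (dcomp n (codegeneracy (Suc n) j) (coface n i), dcomp n (step (Suc n) (Suc j)) (coface n i))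
        = base" if "i \<noteq> j" "i \<noteq> Suc j"
      using H_bdry[OF dcomp_codegeneracy_coface_bdry[OF j i that] dmor_dcomp[OF dmor_coface dmor_step]] .
    ultimately show ?thesis
      using dcomp_codegeneracy_coface_didx[OF j] dcomp_step_coface unfolding face_pattern_def by auto
  qed
  ultimately show ?thesis unfolding hrel_def witness_def using homotopy_slice_bc by blast
qed

end

lemma hrel_of_shtpy:
  assumes S: "shtpy X n A B" and A: "bc A" and B: "bc B"
  shows "hrel n B A"
proof -
  obtain H where H: "smap (sprod (Delta n) (Delta_t 1)) X H"
    and ends: "\<And>m a. a \<in> Simp (Delta n) m \<Longrightarrow> H m (a, const0 m) = ymap X n A m a \<and> H m (a, const1 m) = ymap X n B m a"
    and H_bdry: "\<And>m b t. b \<in> Simp (bdry n) m \<Longrightarrow> t \<in> Simp (Delta_t 1) m \<Longrightarrow> H m (b, t) = ymap X n A m b"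
    using S unfolding shtpy_def htpy_def by blast
  have H_const: "H m (b, t) = vconst X m x" if "b \<in> Simp (bdry n) m" "dmor m 1 t" for m b t
    using H_bdry[OF that(1)] that A unfolding bdry_const_def ymap_def Delta_t_def strat_delta_def by simp
  define e where "e j = H n (didx n, step n j)" for j
  have "step n 0 = const1 n" "step n (Suc n) = const0 n" unfolding step_def const0_def const1_def by auto
  then have "e 0 = B" "e (Suc n) = A"
    using ends[of "didx n" n] dmor_didx act_didx bc_simp A B
    unfolding e_def ymap_def Delta_def strat_delta_def by auto
  moreover have "hrel j (e j) (e (Suc j))" if "j \<le> n" for j
    unfolding e_def using homotopy_slice_hrel[OF H H_const that] .
  ultimately show ?thesis using hrel_chain[of e] by simp
qed

end

text \<open>An m-simplex (a, t) of \<Delta>[n] \<times> \<Delta>[1] lies in the j-th simplex of the standard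
  triangulation of the prism whenever fits n m a t j holds; lift a t : [m] \<rightarrow> [n+1] is then
  its preimage in that (n+1)-simplex, and cut m a t is one admissible j.\<close>
definition fits :: "nat \<Rightarrow> nat \<Rightarrow> (nat \<Rightarrow> nat) \<Rightarrow> (nat \<Rightarrow> nat) \<Rightarrow> nat \<Rightarrow> bool" where
  "fits n m a t j \<longleftrightarrow> j \<le> n \<and> (\<forall>i \<le> m. (t i = 0 \<longrightarrow> a i \<le> j) \<and> (t i \<noteq> 0 \<longrightarrow> j \<le> a i))"

definition cut :: "nat \<Rightarrow> (nat \<Rightarrow> nat) \<Rightarrow> (nat \<Rightarrow> nat) \<Rightarrow> nat" where
  "cut m a t = Max (insert 0 (a ` {i. i \<le> m \<and> t i = 0}))"

definition lift :: "(nat \<Rightarrow> nat) \<Rightarrow> (nat \<Rightarrow> nat) \<Rightarrow> nat \<Rightarrow> nat" where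
  "lift a t = (\<lambda>i. a i + t i)"

lemma dmor_1_cases: "dmor m 1 t \<Longrightarrow> i \<le> m \<Longrightarrow> t i \<noteq> 0 \<Longrightarrow> t i = 1"
  using dmor_le[of m 1 t i] by simp

lemma fits_cut:
  assumes a: "dmor m n a" and t: "dmor m 1 t"
  shows "fits n m a t (cut m a t)"
proof -
  define S where "S = insert 0 (a ` {i. i \<le> m \<and> t i = 0})"
  have S: "finite S" "S \<noteq> {}" "cut m a t = Max S" unfolding S_def cut_def by auto
  have "Max S \<in> S" using Max_in[OF S(1,2)] .
  then consider "Max S = 0" | i' where "i' \<le> m" "t i' = 0" "Max S = a i'" unfolding S_def by auto
  note max_cases = this
  have "cut m a t \<le> n" using max_cases dmor_le[OF a] S(3) by cases auto
  moreover have "a i \<le> cut m a t" if "i \<le> m" "t i = 0" for i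
    using that S unfolding S_def by (simp add: Max_ge_iff)
  moreover have "cut m a t \<le> a i" if i: "i \<le> m" "t i \<noteq> 0" for i
    using max_cases
  proof cases
    case (2 i')
    have "i' < i" using dmor_mono[OF t, of i i'] 2 i by (metis le_zero_eq not_le_imp_less)
    then show ?thesis using dmor_mono[OF a, of i' i] i 2 S(3) by simp
  qed (use S(3) in simp)
  ultimately show ?thesis unfolding fits_def by blast
qed

lemma dmor_lift:
  assumes a: "dmor m n a" and t: "dmor m 1 t"
  shows "dmor m (Suc n) (lift a t)"
  unfolding dmor_def lift_def
proof (intro conjI allI impI)
  fix i assume "i \<le> m" then show "a i + t i \<le> Suc n" using dmor_le[OF a] dmor_le[OF t] by fastforce
next
  fix i j assume "i \<le> j" "j \<le> m" then show "a i + t i \<le> a j + t j"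
    using dmor_mono[OF a] dmor_mono[OF t] add_mono by blast
next
  fix i assume "m < i" then show "a i + t i = 0" using dmor_zero[OF a] dmor_zero[OF t] by simp
qed

lemma fits_between:
  assumes "fits n m a t j" "fits n m a t j'" "j \<le> k" "k \<le> j'"
  shows "fits n m a t k"
  unfolding fits_def
proof (intro conjI allI impI)
  show "k \<le> n" using assms(2,4) unfolding fits_def by simp
next
  fix i assume "i \<le> m"
  then show "t i = 0 \<Longrightarrow> a i \<le> k" "t i \<noteq> 0 \<Longrightarrow> k \<le> a i"
    using assms unfolding fits_def by force+
qed

lemma fits_dcomp: "fits n m a t j \<Longrightarrow> dmor l m g \<Longrightarrow> fits n l (dcomp l a g) (dcomp l t g) j"
  unfolding fits_def dcomp_def using dmor_le by fastforce

lemma lift_dcomp: "lift (dcomp l a g) (dcomp l t g) = dcomp l (lift a t) g"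
  unfolding lift_def dcomp_def by (rule ext) auto

context pointed_wcs_dim
begin

lemma act_vconst_of_face_bc:
  assumes h: "h \<in> Simp X (Suc n)" and u: "dmor m (Suc n) u"
    and s: "s \<le> n" "s \<notin> u ` {0..m}" "Suc s \<notin> u ` {0..m}" and bc: "bc (face n s h)"
  shows "Act X m (Suc n) u h = vconst X m x"
proof -
  have "s \<notin> cofactor s u ` {0..m}"
    using s(2,3) unfolding cofactor_def by (force split: if_splits)
  then have "cofactor s u \<in> Simp (bdry n) m"
    unfolding bdry_simp_iff using dmor_cofactor[OF u _ s(2)] s(1) by auto
  then show ?thesis using act_cofactor[OF h u _ s(2)] s(1) bc unfolding bdry_const_def by simp
qed

definition prism_map :: "(nat \<Rightarrow> 'a) \<Rightarrow> nat \<Rightarrow> (nat \<Rightarrow> nat) \<times> (nat \<Rightarrow> nat) \<Rightarrow> 'a" where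
  "prism_map h m p = Act X m (Suc n) (lift (fst p) (snd p)) (h (cut m (fst p) (snd p)))"

context
  fixes e h :: "nat \<Rightarrow> 'a"
  assumes chain_bc: "\<And>j. j \<le> Suc n \<Longrightarrow> bc (e j)"
    and chain_witness: "\<And>j. j \<le> n \<Longrightarrow> witness j (h j) (e j) (e (Suc j)) base"
begin

lemma chain_simp: "j \<le> n \<Longrightarrow> h j \<in> Simp X (Suc n)"
  using witness_simp[OF chain_witness] .

lemma chain_face: "j \<le> n \<Longrightarrow> i \<le> Suc n \<Longrightarrow> face n i (h j) = face_pattern j (e j) (e (Suc j)) base i"
  using witness_face[OF chain_witness] .

text \<open>Consecutive prism simplices share the face missing the vertex j + 1.\<close>
lemma act_lift_chain_Suc:
  assumes a: "dmor m n a" and t: "dmor m 1 t" and fits: "fits n m a t j" "fits n m a t (Suc j)"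
  shows "Act X m (Suc n) (lift a t) (h j) = Act X m (Suc n) (lift a t) (h (Suc j))"
proof -
  have u: "dmor m (Suc n) (lift a t)" by (rule dmor_lift[OF a t])
  have j: "Suc j \<le> n" using fits(2) unfolding fits_def by simp
  have miss: "Suc j \<notin> lift a t ` {0..m}"
  proof
    assume "Suc j \<in> lift a t ` {0..m}"
    then obtain i where i: "i \<le> m" "a i + t i = Suc j" unfolding lift_def by auto
    then show False using fits dmor_1_cases[OF t i(1)] unfolding fits_def by (cases "t i = 0") fastforce+
  qed
  have "face n (Suc j) (h j) = face n (Suc j) (h (Suc j))"
    using chain_face[of j "Suc j"] chain_face[of "Suc j" "Suc j"] j unfolding face_pattern_def by simp
  then show ?thesis
    using act_cofactor[OF chain_simp u _ miss] j by simp
qed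

lemma act_lift_chain:
  assumes a: "dmor m n a" and t: "dmor m 1 t" and fits: "fits n m a t j" "fits n m a t j'"
  shows "Act X m (Suc n) (lift a t) (h j) = Act X m (Suc n) (lift a t) (h j')"
proof -
  have up: "Act X m (Suc n) (lift a t) (h j) = Act X m (Suc n) (lift a t) (h (j + d))"
    if "fits n m a t j" "fits n m a t j'" "j + d \<le> j'" for j j' d
    using that(3)
  proof (induction d)
    case (Suc d)
    have "fits n m a t (j + d)" "fits n m a t (Suc (j + d))"
      using fits_between[OF that(1,2)] Suc.prems by auto
    with Suc show ?case using act_lift_chain_Suc[OF a t] by simp
  qed simp
  show ?thesis
  proof (cases "j \<le> j'")
    case True
    then show ?thesis using up[OF fits, of "j' - j"] by simp
  next
    case False
    then show ?thesis using up[OF fits(2,1), of "j - j'"] by simp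
  qed
qed

lemma prism_map_eq:
  assumes a: "dmor m n a" and t: "dmor m 1 t" and fits: "fits n m a t j"
  shows "prism_map h m (a, t) = Act X m (Suc n) (lift a t) (h j)"
  unfolding prism_map_def using act_lift_chain[OF a t fits_cut[OF a t] fits] by simp

lemma cut_le: "dmor m n a \<Longrightarrow> dmor m 1 t \<Longrightarrow> cut m a t \<le> n"
  using fits_cut unfolding fits_def by blast

lemma prism_map_thin:
  assumes "p \<in> Thin (sprod (Delta n) (Delta_t 1)) m"
  shows "prism_map h m p \<in> Thin X m"
proof -
  define a t where "a = fst p" and "t = snd p"
  have dg: "a \<in> dgn n m" and t: "dmor m 1 t" using sprod_Delta_thin[OF assms] unfolding a_def t_def by auto
  have a: "dmor m n a" using dgn_dmor[OF dg] .
  define J where "J = cut m a t"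
  have fits: "fits n m a t J" unfolding J_def by (rule fits_cut[OF a t])
  have J: "J \<le> n" using fits unfolding fits_def by simp
  have u: "dmor m (Suc n) (lift a t)" by (rule dmor_lift[OF a t])
  have eq: "prism_map h m p = Act X m (Suc n) (lift a t) (h J)" unfolding prism_map_def a_def t_def J_def ..
  obtain i where i: "i < m" "a i = a (Suc i)" using dgn_repeat[OF dg] by blast
  show ?thesis
  proof (cases "t i = t (Suc i)")
    case True
    then have "lift a t i = lift a t (Suc i)" using i unfolding lift_def by simp
    then show ?thesis using repeat_thin[OF u i(1) _ chain_simp[OF J]] eq by simp
  next
    case False
    then have t01: "t i = 0" "t (Suc i) = 1"
      using dmor_mono[OF t, of i "Suc i"] dmor_le[OF t, of "Suc i"] i by auto
    then have "a i = J" using fits i unfolding fits_def by (metis Suc_leI le_antisym less_imp_le_nat zero_neq_one)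
    then have "lift a t i = J" "lift a t (Suc i) = Suc J" using t01 i unfolding lift_def by auto
    then have hit: "J \<in> lift a t ` {0..m}" "Suc J \<in> lift a t ` {0..m}"
      using i image_eqI[of J "lift a t" i] image_eqI[of "Suc J" "lift a t" "Suc i"] by auto
    show ?thesis unfolding eq
    proof (rule thin_act_of_faces_vconst[OF _ _ u])
      show "h J \<in> Thin X (Suc n)" using chain_witness[OF J] unfolding witness_def by blast
      show "1 \<le> m" using i by simp
      fix s assume "s \<le> Suc n" "s \<notin> lift a t ` {0..m}"
      then show "face n s (h J) = vconst X n x"
        using chain_face[OF J] hit unfolding face_pattern_def by (metis Suc_n_not_le_n)
    qed
  qed
qed

lemma smap_prism_map: "smap (sprod (Delta n) (Delta_t 1)) X (prism_map h)"
  unfolding smap_def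
proof (intro conjI allI impI)
  fix m p assume "p \<in> Simp (sprod (Delta n) (Delta_t 1)) m"
  then have a: "dmor m n (fst p)" and t: "dmor m 1 (snd p)" unfolding sprod_Delta_simp by auto
  show "prism_map h m p \<in> Simp X m"
    unfolding prism_map_def by (rule act_simp[OF dmor_lift[OF a t] chain_simp[OF cut_le[OF a t]]])
next
  fix l m g p assume g: "dmor l m g" and "p \<in> Simp (sprod (Delta n) (Delta_t 1)) m"
  then have a: "dmor m n (fst p)" and t: "dmor m 1 (snd p)" unfolding sprod_Delta_simp by auto
  define J where "J = cut m (fst p) (snd p)"
  have fits: "fits n m (fst p) (snd p) J" unfolding J_def by (rule fits_cut[OF a t])
  have "prism_map h l (Act (sprod (Delta n) (Delta_t 1)) l m g p)
      = prism_map h l (dcomp l (fst p) g, dcomp l (snd p) g)"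
    unfolding sprod_Delta_act ..
  also have "\<dots> = Act X l (Suc n) (lift (dcomp l (fst p) g) (dcomp l (snd p) g)) (h J)"
    by (rule prism_map_eq[OF dmor_dcomp[OF g a] dmor_dcomp[OF g t] fits_dcomp[OF fits g]])
  also have "\<dots> = Act X l m g (Act X m (Suc n) (lift (fst p) (snd p)) (h J))"
    unfolding lift_dcomp using act_dcomp[OF g dmor_lift[OF a t] chain_simp] fits unfolding fits_def by simp
  also have "Act X m (Suc n) (lift (fst p) (snd p)) (h J) = prism_map h m p"
    unfolding prism_map_def J_def ..
  finally show "prism_map h l (Act (sprod (Delta n) (Delta_t 1)) l m g p) = Act X l m g (prism_map h m p)" .
next
  fix m p assume "p \<in> Thin (sprod (Delta n) (Delta_t 1)) m"
  then show "prism_map h m p \<in> Thin X m" by (rule prism_map_thin)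
qed

lemma prism_map_const0:
  assumes a: "dmor m n a"
  shows "prism_map h m (a, const0 m) = Act X m n a (e (Suc n))"
proof -
  have t: "dmor m 1 (const0 m)" unfolding const0_def dmor_def by simp
  have lift: "lift a (const0 m) = a" unfolding lift_def const0_def by simp
  have u: "dmor m (Suc n) a" using dmor_lift[OF a t] unfolding lift .
  have miss: "Suc n \<notin> a ` {0..m}" using dmor_le[OF a] by fastforce
  have "cofactor (Suc n) a = a"
    unfolding cofactor_def using dmor_le[OF a] dmor_zero[OF a] by (intro ext) (metis le_imp_less_Suc not_less zero_less_Suc)
  moreover have "face n (Suc n) (h n) = e (Suc n)" using chain_face[of n "Suc n"] unfolding face_pattern_def by simp
  moreover have "fits n m a (const0 m) n" unfolding fits_def const0_def using dmor_le[OF a] by simp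
  ultimately show ?thesis
    using prism_map_eq[OF a t] act_cofactor[OF chain_simp u _ miss] lift by simp
qed

lemma prism_map_const1:
  assumes a: "dmor m n a"
  shows "prism_map h m (a, const1 m) = Act X m n a (e 0)"
proof -
  have t: "dmor m 1 (const1 m)" unfolding const1_def dmor_def by simp
  have miss: "0 \<notin> lift a (const1 m) ` {0..m}" unfolding lift_def const1_def by auto
  have "cofactor 0 (lift a (const1 m)) = a"
    unfolding cofactor_def lift_def const1_def using dmor_zero[OF a] by (intro ext) auto
  moreover have "face n 0 (h 0) = e 0" using chain_face[of 0 0] unfolding face_pattern_def by simp
  moreover have "fits n m a (const1 m) 0" unfolding fits_def const1_def by simp
  ultimately show ?thesis
    using prism_map_eq[OF a t] act_cofactor[OF chain_simp dmor_lift[OF a t] _ miss] by simp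
qed

lemma prism_map_bdry:
  assumes b: "b \<in> Simp (bdry n) m" and t: "dmor m 1 t"
  shows "prism_map h m (b, t) = vconst X m x"
proof -
  obtain p where bd: "dmor m n b" and p: "p \<le> n" "p \<notin> b ` {0..m}" using b unfolding bdry_simp_iff by blast
  define J where "J = cut m b t"
  have fits: "fits n m b t J" unfolding J_def by (rule fits_cut[OF bd t])
  have J: "J \<le> n" using fits unfolding fits_def by simp
  have u: "dmor m (Suc n) (lift b t)" by (rule dmor_lift[OF bd t])
  have vertex_bounds: "b i \<noteq> p" "t i = 0 \<Longrightarrow> b i \<le> J" "t i \<noteq> 0 \<Longrightarrow> J \<le> b i \<and> t i = 1" if "i \<le> m" for i
    using p fits that dmor_1_cases[OF t that] unfolding fits_def by auto
  have miss: "q \<notin> lift b t ` {0..m}" if "q = p \<and> p < J \<or> q = Suc p \<and> J < p \<or> (q = J \<or> q = Suc J) \<and> p = J" for q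
  proof
    assume "q \<in> lift b t ` {0..m}"
    then obtain i where i: "i \<le> m" "b i + t i = q" unfolding lift_def by auto
    then show False using that vertex_bounds[OF i(1)] by (cases "t i = 0") auto
  qed
  have "Act X m (Suc n) (lift b t) (h J) = vconst X m x"
  proof (cases p J rule: linorder_cases)
    case less
    then have "face n p (h J) = base" using chain_face[OF J, of p] p unfolding face_pattern_def by auto
    then show ?thesis using act_vconst_of_face[OF chain_simp[OF J] u _ miss] less p by simp
  next
    case greater
    then have "face n (Suc p) (h J) = base" using chain_face[OF J, of "Suc p"] p unfolding face_pattern_def by auto
    then show ?thesis using act_vconst_of_face[OF chain_simp[OF J] u _ miss] greater p by simp
  next
    case equal
    have "bc (face n J (h J))" using chain_face[OF J, of J] chain_bc[of J] J unfolding face_pattern_def by simp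
    then show ?thesis using act_vconst_of_face_bc[OF chain_simp[OF J] u J miss miss] equal by simp
  qed
  then show ?thesis using prism_map_eq[OF bd t fits] by simp
qed

lemma shtpy_of_chain: "shtpy X n (e (Suc n)) (e 0)"
  unfolding shtpy_def htpy_def
proof (intro conjI allI impI exI[of _ "prism_map h"])
  show "smap (Delta n) X (ymap X n (e (Suc n)))" "smap (Delta n) X (ymap X n (e 0))"
    using smap_ymap[OF stratified] bc_simp chain_bc by auto
  show "smap (sprod (Delta n) (Delta_t 1)) X (prism_map h)" by (rule smap_prism_map)
next
  fix m b assume "b \<in> Simp (bdry n) m"
  then show "ymap X n (e (Suc n)) m b = ymap X n (e 0) m b"
    using chain_bc[of 0] chain_bc[of "Suc n"] unfolding bdry_const_def ymap_def by simp
next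
  fix m a assume "a \<in> Simp (Delta n) m"
  then have "dmor m n a" unfolding Delta_def strat_delta_def by simp
  then show "prism_map h m (a, const0 m) = ymap X n (e (Suc n)) m a"
    "prism_map h m (a, const1 m) = ymap X n (e 0) m a"
    unfolding ymap_def using prism_map_const0 prism_map_const1 by auto
next
  fix m b t assume b: "b \<in> Simp (bdry n) m" and "t \<in> Simp (Delta_t 1) m"
  then have "dmor m 1 t" unfolding Delta_t_def strat_delta_def by simp
  then show "prism_map h m (b, t) = ymap X n (e (Suc n)) m b"
    using prism_map_bdry[OF b] chain_bc[of "Suc n"] b unfolding bdry_const_def ymap_def by simp
qed

end

lemma shtpy_of_hrel:
  assumes "hrel n B A"
  shows "shtpy X n A B"
proof -
  define e where "e i = (if i = 0 then B else A)" for i :: nat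
  have B: "bc B" and A: "bc A" using assms unfolding hrel_def by auto
  have "hrel 0 B A" using assms hrel_eq_top[of 0] by simp
  then have "\<exists>h. witness j h (e j) (e (Suc j)) base" if "j \<le> n" for j
    using witness_refl[OF A that] unfolding e_def hrel_def by auto
  then obtain h where "\<And>j. j \<le> n \<Longrightarrow> witness j (h j) (e j) (e (Suc j)) base" by metis
  moreover have "bc (e j)" for j using A B unfolding e_def by simp
  ultimately have "shtpy X n (e (Suc n)) (e 0)" by (intro shtpy_of_chain)
  then show ?thesis unfolding e_def by simp
qed

end

section \<open>The middle face of a filler\<close>

context pointed_wcs_dim
begin

lemma witness_of_filler:
  assumes \<theta>: "smap (Delta_k n (n + 1)) X \<theta>"
    and a: "\<theta> n (coface n (n - 1)) = a" and c: "\<theta> n (coface n (n + 1)) = c"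
    and const: "\<forall>i\<le>n + 1. i \<notin> {n - 1, n, n + 1} \<longrightarrow> \<theta> n (coface n i) = vconst X n x"
  shows "witness (n - 1) (\<theta> (Suc n) (didx (Suc n))) a (\<theta> n (coface n n)) c"
proof -
  have "didx (Suc n) \<in> Thin (Delta_k n (n + 1)) (Suc n)"
    using dmor_didx by (auto simp: Delta_k_def strat_delta_def hornset_def didx_def image_iff)
  then have "\<theta> (Suc n) (didx (Suc n)) \<in> Thin X (Suc n)" using smap_thin[OF \<theta>] by simp
  moreover have "face n i (\<theta> (Suc n) (didx (Suc n))) = \<theta> n (coface n i)" for i
    using face_smap_didx \<theta> unfolding Delta_k_def by simp
  ultimately show ?thesis
    unfolding witness_def face_pattern_def using a c const dim_pos by auto
qed

lemma witness_with_ends: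
  assumes a: "bc a" and c: "bc c"
  shows "\<exists>z. witness (n - 1) z a (face n n z) c"
proof -
  obtain K where K: "n = Suc K" using dim_pos by (cases n) auto
  define y where "y i = (if i = K then a else if i = Suc (Suc K) then c else vconst X (Suc K) x)" for i
  have y_simp: "y i \<in> Simp X (Suc K)" for i using bc_simp[OF a] bc_simp[OF c] vconst_simp K unfolding y_def by auto
  have "a \<in> Simp X (Suc K)" "c \<in> Simp X (Suc K)" using bc_simp a c K by auto
  then have "\<forall>s\<le>Suc K. face K s a = vconst X K x" "\<forall>s\<le>Suc K. face K s c = vconst X K x"
    using bdry_const_iff_faces a c K by auto
  then have y_faces: "face K s (y i) = vconst X K x" if "s \<le> Suc K" for s i
    using that face_vconst unfolding y_def by auto
  obtain z where z: "z \<in> Thin X (Suc (Suc K))" "\<And>i. i \<le> Suc (Suc K) \<Longrightarrow> i \<noteq> Suc K \<Longrightarrow> face (Suc K) i z = y i"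
  proof (rule horn_fill[of K "Suc K" y])
    fix i m u assume i: "i \<le> Suc (Suc K)" "i \<noteq> Suc K" "i \<notin> hornset (Suc K) (Suc (Suc K))"
      and u: "dmor m (Suc K) u" and H: "hornset (Suc K) (Suc (Suc K)) \<subseteq> (\<lambda>t. coface (Suc K) i (u t)) ` {0..m}"
    have "K \<in> hornset (Suc K) (Suc (Suc K))" "Suc K \<in> hornset (Suc K) (Suc (Suc K))"
      unfolding hornset_def by auto
    then have m: "1 \<le> m"
      using pos_if_two_values[of K "Suc K" "\<lambda>t. coface (Suc K) i (u t)" m] subsetD[OF H] by auto
    have "y i = vconst X (Suc K) x" using i unfolding y_def hornset_def by auto
    then show "Act X m (Suc K) u (y i) \<in> Thin X m" using act_vconst[OF u] vconst_thin[OF m] by simp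
  qed (use y_simp y_faces in auto)
  then have "witness K z a (face n n z) c"
    unfolding witness_def face_pattern_def y_def using K by auto
  then show ?thesis using K by auto
qed

text \<open>Given the middle faces b, b' of two witnesses, compare both with the middle face of a
  witness for a' and c and move the differences through two tetrahedra.\<close>
lemma witness_middle_hrel:
  assumes W: "witness (n - 1) h a b c" and W': "witness (n - 1) h' a' b' c'"
    and bc: "bc a" "bc a'" "bc c" "bc c'" and rel: "hrel n a a'" "hrel n c c'"
  shows "hrel n b b'"
proof -
  define j where "j = n - 1"
  have j: "Suc j \<le> n" "Suc j = n" using dim_pos unfolding j_def by auto
  obtain z where Z: "witness j z a' (face n n z) c" using witness_with_ends[OF bc(2,3)] j_def by blast
  define b'' where "b'' = face n n z"
  have b: "bc b" "bc b'" "bc b''" using witness_bdry_const j W W' Z bc unfolding j_def b''_def by auto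
  let ?M = "tetra_edges base a' a b'' b c"
  have "hrel (Suc j) a' a" using rel(1) hrel_top_sym j by simp
  then have W0: "\<exists>h. witness j h base a' a" unfolding hrel_Suc by blast
  have W1: "\<exists>h. witness j h a b c" and WZ: "\<exists>h. witness j h a' b'' c"
    using W Z unfolding j_def b''_def by blast+
  have "\<exists>h. witness j h (subface ?M 1 0) (subface ?M 1 1) (subface ?M 1 2)"
    by (rule witness_tetra[OF j(1)]) (simp_all add: W0 W1 WZ)
  then have b''_b: "hrel (Suc j) b'' b" unfolding hrel_Suc subface_tetra_edges using b by blast
  let ?M' = "tetra_edges a' b'' c b' c' base"
  have "hrel j c c'" using rel(2) hrel_eq_top[of j] j by simp
  then have W3: "\<exists>h. witness j h c c' base" unfolding hrel_def by blast
  have W1': "\<exists>h. witness j h a' b' c'" using W' unfolding j_def by blast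
  have "\<exists>h. witness j h (subface ?M' 2 0) (subface ?M' 2 1) (subface ?M' 2 2)"
    by (rule witness_tetra[OF j(1)]) (simp_all add: W1' W3 WZ)
  then have "hrel j b'' b'" unfolding hrel_def subface_tetra_edges using b by blast
  then have "hrel n b'' b" "hrel n b'' b'" using b''_b hrel_eq_top[of j] j by auto
  then show ?thesis using hrel_top_sym hrel_top_trans by blast
qed

end

theorem mainTheorem3:
  fixes X :: "'a sset" and x :: 'a and n :: nat
    and \<alpha> \<alpha>' \<beta> \<beta>' :: 'a
    and \<theta> \<theta>' :: "nat \<Rightarrow> (nat \<Rightarrow> nat) \<Rightarrow> 'a"
  assumes "weak_complicial X"
    and "x \<in> Simp X 0"
    and "1 \<le> n"
    and "bdry_const X n x \<alpha>" and "bdry_const X n x \<alpha>'"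
    and "bdry_const X n x \<beta>" and "bdry_const X n x \<beta>'"
    and "shtpy X n \<alpha> \<alpha>'" and "shtpy X n \<beta> \<beta>'"
    and "smap (Delta_k n (n + 1)) X \<theta>"
    and "\<theta> n (coface n (n - 1)) = \<alpha>" and "\<theta> n (coface n (n + 1)) = \<beta>"
    and "\<forall>i\<le>n + 1. i \<notin> {n - 1, n, n + 1} \<longrightarrow> \<theta> n (coface n i) = vconst X n x"
    and "smap (Delta_k n (n + 1)) X \<theta>'"
    and "\<theta>' n (coface n (n - 1)) = \<alpha>'" and "\<theta>' n (coface n (n + 1)) = \<beta>'"
    and "\<forall>i\<le>n + 1. i \<notin> {n - 1, n, n + 1} \<longrightarrow> \<theta>' n (coface n i) = vconst X n x"
  shows "shtpy X n (\<theta> n (coface n n)) (\<theta>' n (coface n n))"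
proof -
  interpret pointed_wcs_dim X x n
    using assms(1-3) by unfold_locales
  have \<theta>: "witness (n - 1) (\<theta> (Suc n) (didx (Suc n))) \<alpha> (\<theta> n (coface n n)) \<beta>"
    and \<theta>': "witness (n - 1) (\<theta>' (Suc n) (didx (Suc n))) \<alpha>' (\<theta>' n (coface n n)) \<beta>'"
    using witness_of_filler assms(10-17) by auto
  have "hrel n \<alpha> \<alpha>'" "hrel n \<beta> \<beta>'"
    using hrel_of_shtpy[OF assms(8)] hrel_of_shtpy[OF assms(9)] assms(4-7) hrel_top_sym by blast+
  then have "hrel n (\<theta> n (coface n n)) (\<theta>' n (coface n n))"
    by (rule witness_middle_hrel[OF \<theta> \<theta>' assms(4,5,6,7)])
  then show ?thesis by (rule shtpy_of_hrel[OF hrel_top_sym])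
qed

end
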